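(* There exist absolute constants $C_1,C_2>0$ such that the following holds. Let $\Xi=A-P_*$, let $\mathrm{Pen}$ be any penalty function, and let $(\hat\Theta,\hat Z,\hat J,\hat K)$ be a solution of $$\min_{\Theta,Z,J,K}\Big\{\sum_{k,l=1}^K\|A^{(k,l)}(Z,K)-\Theta^{(k,l)}\|_F^2+\mathrm{Pen}(n,J,K)\Big\}$$ over $K\in\{1,\dots,n\}$, $Z\in\mathcal M_{n,K}$, sparsity families $J$ for $(Z,K)$ and block matrices $\Theta$ with rank-one blocks $\Theta^{(k,l)}$ supported on $J_{k,l}\times J_{l,k}$. Then for any $t>0$, $$\mathbb P\Big\{\sum_{k,l=1}^{\hat K}\big\|\Pi_{\hat J^{(k,l)}}(\Xi^{(k,l)}(\hat Z,\hat K))\big\|_{op}^2-F_1(n,\hat J,\hat K)\le C_2t\Big\}\ge1-e^{-t},$$ where $F_1$ may be taken to be either $F_1^{(ns)}(n,J,K)=(C_1+C_2)|J|\ln(nKe/|J|)+C_2(3\ln n+n\ln K)$ or $F_1^{(s)}(n,J,K)=(C_1+C_2)\sum_{k,l=1}^K|J_{k,l}|\ln(n_ke/|J_{k,l}|)+C_2\big(\ln n+n\ln K+K\sum_{k=1}^K\ln n_k\big)$, the $n_k$ being the community sizes of $\hat Z$.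
   Context: $A\in\{0,1\}^{n\times n}$ symmetric, $A_{ij}\sim\mathrm{Bernoulli}((P_* )_{ij})$ independent for $1\le i\le j\le n$, $P_*$ symmetric. $\mathcal M_{n,K}$: clustering matrices $Z\in\{0,1\}^{n\times K}$ (one $1$ per row), community $\mathcal N_k$ of size $n_k$. For $B\in\mathbb R^{n\times n}$, $B^{(k,l)}(Z,K)\in\mathbb R^{n_k\times n_l}$ is the block with rows in $\mathcal N_k$ and columns in $\mathcal N_l$ after reordering nodes by community. A sparsity family is $J=(J_{k,l})_{k,l=1}^K$ with $J_{k,l}\subseteq\mathcal N_k$, $J^{(k,l)}=J_{k,l}\times J_{l,k}$, $|J|=\sum_{k,l}|J_{k,l}|$; $\Pi_{J^{(k,l)}}(X)$ zeroes entries outside $J^{(k,l)}$. Convention $0\cdot\ln(c/0)=0$. *)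

theory Defs
  imports "HOL-Probability.Probability"
begin

(* Nodes are 0..<n, communities are 0..<K. A clustering matrix Z in M_{n,K}
   is represented by its label function z : node -> community. *)

definition clustering :: "nat \<Rightarrow> nat \<Rightarrow> (nat \<Rightarrow> nat) \<Rightarrow> bool" where
  "clustering n K z \<longleftrightarrow> (\<forall>i<n. z i < K)"

definition comm :: "nat \<Rightarrow> (nat \<Rightarrow> nat) \<Rightarrow> nat \<Rightarrow> nat set" where
  "comm n z k = {i. i < n \<and> z i = k}"

definition csize :: "nat \<Rightarrow> (nat \<Rightarrow> nat) \<Rightarrow> nat \<Rightarrow> nat" where
  "csize n z k = card (comm n z k)"

definition sparsity_family :: "nat \<Rightarrow> nat \<Rightarrow> (nat \<Rightarrow> nat) \<Rightarrow> (nat \<Rightarrow> nat \<Rightarrow> nat set) \<Rightarrow> bool" where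
  "sparsity_family n K z J \<longleftrightarrow>
     (\<forall>k<K. \<forall>l<K. J k l \<subseteq> comm n z k) \<and> (\<forall>k l. K \<le> k \<or> K \<le> l \<longrightarrow> J k l = {})"

definition Jcard :: "nat \<Rightarrow> (nat \<Rightarrow> nat \<Rightarrow> nat set) \<Rightarrow> nat" where
  "Jcard K J = (\<Sum>k<K. \<Sum>l<K. card (J k l))"

definition rank_one_blocks :: "nat \<Rightarrow> nat \<Rightarrow> (nat \<Rightarrow> nat) \<Rightarrow> (nat \<Rightarrow> nat \<Rightarrow> nat set)
    \<Rightarrow> (nat \<Rightarrow> nat \<Rightarrow> real) \<Rightarrow> bool" where
  "rank_one_blocks n K z J \<Theta> \<longleftrightarrow>
     (\<forall>k<K. \<forall>l<K. \<exists>u v :: nat \<Rightarrow> real.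
        (\<forall>i. i \<notin> J k l \<longrightarrow> u i = 0) \<and> (\<forall>j. j \<notin> J l k \<longrightarrow> v j = 0) \<and>
        (\<forall>i\<in>comm n z k. \<forall>j\<in>comm n z l. \<Theta> i j = u i * v j))"

definition feasible :: "nat \<Rightarrow> (nat \<Rightarrow> nat \<Rightarrow> real) \<Rightarrow> (nat \<Rightarrow> nat) \<Rightarrow> (nat \<Rightarrow> nat \<Rightarrow> nat set)
    \<Rightarrow> nat \<Rightarrow> bool" where
  "feasible n \<Theta> z J K \<longleftrightarrow>
     K \<in> {1..n} \<and> clustering n K z \<and> sparsity_family n K z J \<and> rank_one_blocks n K z J \<Theta>"

definition objective :: "nat \<Rightarrow> (nat \<Rightarrow> (nat \<Rightarrow> nat \<Rightarrow> nat set) \<Rightarrow> nat \<Rightarrow> real)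
    \<Rightarrow> (nat \<Rightarrow> nat \<Rightarrow> bool) \<Rightarrow> (nat \<Rightarrow> nat \<Rightarrow> real) \<Rightarrow> (nat \<Rightarrow> nat)
    \<Rightarrow> (nat \<Rightarrow> nat \<Rightarrow> nat set) \<Rightarrow> nat \<Rightarrow> real" where
  "objective n Pen A \<Theta> z J K =
     (\<Sum>k<K. \<Sum>l<K. \<Sum>i\<in>comm n z k. \<Sum>j\<in>comm n z l. (of_bool (A i j) - \<Theta> i j)\<^sup>2) + Pen n J K"

definition op_norm :: "nat set \<Rightarrow> nat set \<Rightarrow> (nat \<Rightarrow> nat \<Rightarrow> real) \<Rightarrow> real" where
  "op_norm I C M = Sup {sqrt (\<Sum>i\<in>I. (\<Sum>j\<in>C. M i j * x j)\<^sup>2) | x. (\<Sum>j\<in>C. (x j)\<^sup>2) \<le> 1}"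

definition proj_block :: "(nat \<Rightarrow> nat \<Rightarrow> nat set) \<Rightarrow> nat \<Rightarrow> nat \<Rightarrow> (nat \<Rightarrow> nat \<Rightarrow> real)
    \<Rightarrow> nat \<Rightarrow> nat \<Rightarrow> real" where
  "proj_block J k l X i j = (if i \<in> J k l \<and> j \<in> J l k then X i j else 0)"

definition proj_op_sum :: "nat \<Rightarrow> (nat \<Rightarrow> nat) \<Rightarrow> (nat \<Rightarrow> nat \<Rightarrow> nat set) \<Rightarrow> nat
    \<Rightarrow> (nat \<Rightarrow> nat \<Rightarrow> real) \<Rightarrow> real" where
  "proj_op_sum n z J K X =
     (\<Sum>k<K. \<Sum>l<K. (op_norm (comm n z k) (comm n z l) (proj_block J k l X))\<^sup>2)"

definition adj_pmf :: "nat \<Rightarrow> (nat \<Rightarrow> nat \<Rightarrow> real) \<Rightarrow> (nat \<Rightarrow> nat \<Rightarrow> bool) pmf" where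
  "adj_pmf n P = map_pmf (\<lambda>b i j. if i \<le> j then b (i, j) else b (j, i))
     (Pi_pmf {(i, j). i \<le> j \<and> j < n} False (\<lambda>(i, j). bernoulli_pmf (P i j)))"

(* the two choices of F_1; convention 0 * ln(c/0) = 0 holds since x/0 = 0 and ln 0 = 0 *)
definition F1_ns :: "real \<Rightarrow> real \<Rightarrow> nat \<Rightarrow> (nat \<Rightarrow> nat \<Rightarrow> nat set) \<Rightarrow> nat \<Rightarrow> real" where
  "F1_ns C1 C2 n J K =
     (C1 + C2) * real (Jcard K J) * ln (real n * real K * exp 1 / real (Jcard K J))
     + C2 * (3 * ln (real n) + real n * ln (real K))"

definition F1_s :: "real \<Rightarrow> real \<Rightarrow> nat \<Rightarrow> (nat \<Rightarrow> nat) \<Rightarrow> (nat \<Rightarrow> nat \<Rightarrow> nat set) \<Rightarrow> nat \<Rightarrow> real" where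
  "F1_s C1 C2 n z J K =
     (C1 + C2) * (\<Sum>k<K. \<Sum>l<K. real (card (J k l)) * ln (real (csize n z k) * exp 1 / real (card (J k l))))
     + C2 * (ln (real n) + real n * ln (real K) + real K * (\<Sum>k<K. ln (real (csize n z k))))"

end

theory Submission
  imports Defs
begin

(* Fix a model (K, z, J). The square root of the sum of the squared operator norms
   of the projected blocks of Xi = A - P is the supremum of the bilinear form
   sum_{k,l} u_kl^T Xi^(k,l) v_kl, where the left vectors jointly, and the right vectors
   blockwise, range over unit balls supported on J. Rounding the vectors to a grid gives nets of
   size 48^|J| on each side, and the supremum is at most twice the maximum over the nets. Each
   value of the form is a linear form with unit Frobenius weights in the independent entries of
   the upper triangle of A, so Hoeffding's inequality bounds its tail by exp (-r^2). Hence
   P (sum > tau) <= 48^(2|J|) exp (-tau/4) for the fixed model.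
   A union bound over K, the K^n clusterings and the sparsity families, whose number is
   controlled through binomial estimates by the entropy terms of F_1, makes the bound uniform in
   the model, hence valid for the estimator. For the blockwise F_1 the count factorises over the
   blocks, after blocks with fewer than two rows or columns have been discarded. *)
section \<open>Linear forms of the adjacency matrix\<close>

lemma sum_square_eq_sum_upper_triangle:
  fixes g :: "nat \<Rightarrow> nat \<Rightarrow> 'a::comm_monoid_add"
  shows "(\<Sum>i<n. \<Sum>j<n. g i j) =
    (\<Sum>p\<in>{(i,j). i \<le> j \<and> j < n}.
       if fst p = snd p then g (fst p) (fst p) else g (fst p) (snd p) + g (snd p) (fst p))"
proof (induction n)
  case 0
  then show ?case by simp
next
  case (Suc n)
  let ?h = "\<lambda>p. if fst p = snd p then g (fst p) (fst p) else g (fst p) (snd p) + g (snd p) (fst p)"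
  have split: "{(i,j). i \<le> j \<and> j < Suc n} = {(i,j). i \<le> j \<and> j < n} \<union> (\<lambda>i. (i,n)) ` {..n}"
    by auto
  have fin: "finite {(i,j). i \<le> j \<and> j < n}"
    by (rule finite_subset[of _ "{..n} \<times> {..n}"]) auto
  have "(\<Sum>p\<in>{(i,j). i \<le> j \<and> j < Suc n}. ?h p) =
      (\<Sum>p\<in>{(i,j). i \<le> j \<and> j < n}. ?h p) + (\<Sum>p\<in>(\<lambda>i. (i,n)) ` {..n}. ?h p)"
    unfolding split by (rule sum.union_disjoint[OF fin]) auto
  also have "(\<Sum>p\<in>(\<lambda>i. (i,n)) ` {..n}. ?h p) = (\<Sum>i\<le>n. ?h (i,n))"
    by (subst sum.reindex) (auto simp: inj_on_def)
  also have "\<dots> = (\<Sum>i<n. g i n + g n i) + g n n"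
    unfolding lessThan_Suc_atMost[symmetric] by simp
  finally show ?case
    using Suc by (simp add: sum.distrib add_ac)
qed

lemma square_sum_le_twice_sum_squares: "(a + b)\<^sup>2 \<le> 2 * a\<^sup>2 + 2 * (b::real)\<^sup>2"
  using zero_le_power2[of "a - b"] by (simp add: power2_eq_square algebra_simps)

lemma prob_weighted_bernoulli_sum_ge:
  fixes c q :: "'a \<Rightarrow> real"
  assumes fin: "finite I" and q: "\<And>p. p \<in> I \<Longrightarrow> 0 \<le> q p \<and> q p \<le> 1"
    and r: "r > 0" and c: "(\<Sum>p\<in>I. (c p)\<^sup>2) \<le> s" and s: "0 < s"
  shows "measure_pmf.prob (Pi_pmf I False (\<lambda>p. bernoulli_pmf (q p)))
     {b. (\<Sum>p\<in>I. c p * (of_bool (b p) - q p)) \<ge> r} \<le> exp (- 2 * r\<^sup>2 / s)"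
proof (cases "(\<Sum>p\<in>I. (c p)\<^sup>2) = 0")
  case True
  then have "\<forall>p\<in>I. c p = 0" using fin by (simp add: sum_nonneg_eq_0_iff)
  then show ?thesis using r by simp
next
  case False
  then have pos: "(\<Sum>p\<in>I. (c p)\<^sup>2) > 0" by (simp add: sum_nonneg order_le_neq_trans)
  define M where "M = Pi_pmf I False (\<lambda>p. bernoulli_pmf (q p))"
  define X where "X = (\<lambda>p (b :: 'a \<Rightarrow> bool). c p * (of_bool (b p) - q p))"
  define a where "a p = min (c p * (0 - q p)) (c p * (1 - q p))" for p
  define b where "b p = max (c p * (0 - q p)) (c p * (1 - q p))" for p
  have width: "(b p - a p)\<^sup>2 = (c p)\<^sup>2" for p
    by (auto simp: a_def b_def min_def max_def algebra_simps power2_eq_square)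
  have centered: "measure_pmf.expectation M (X p) = 0" if "p \<in> I" for p
  proof -
    have "measure_pmf.expectation M (X p) =
        measure_pmf.expectation (map_pmf (\<lambda>b. b p) M) (\<lambda>x. c p * (of_bool x - q p))"
      by (simp add: X_def)
    also have "map_pmf (\<lambda>b. b p) M = bernoulli_pmf (q p)"
      unfolding M_def using that fin by (subst Pi_pmf_component) auto
    finally show ?thesis using q[OF that] by (simp add: of_bool_def algebra_simps)
  qed
  interpret H: Hoeffding_ineq "measure_pmf M" I X a b "\<Sum>p\<in>I. measure_pmf.expectation M (X p)"
  proof unfold_locales
    show "prob_space.indep_vars (measure_pmf M) (\<lambda>_. borel) X I"
      unfolding M_def X_def
      by (intro prob_space.indep_vars_compose2[OF _ indep_vars_Pi_pmf[OF fin],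
            where Y = "\<lambda>p x. c p * (of_bool x - q p)", unfolded o_def])
         (auto simp: measure_pmf.prob_space_axioms)
    fix p assume "p \<in> I"
    show "AE x in measure_pmf M. X p x \<in> {a p..b p}"
      by (intro AE_I2) (auto simp: X_def a_def b_def)
  qed (simp_all add: fin)
  have "measure_pmf.prob M {b. (\<Sum>p\<in>I. X p b) \<ge> r} \<le> exp (- 2 * r\<^sup>2 / (\<Sum>p\<in>I. (c p)\<^sup>2))"
    using H.Hoeffding_ineq_ge[of r] r pos centered by (simp add: width)
  also have "\<dots> \<le> exp (- 2 * r\<^sup>2 / s)"
    using pos c r by (simp add: frac_le)
  finally show ?thesis by (simp add: M_def X_def)
qed

lemma prob_adj_linear_form_ge:
  fixes w :: "nat \<Rightarrow> nat \<Rightarrow> real"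
  assumes P: "\<forall>i j. 0 \<le> P i j \<and> P i j \<le> 1 \<and> P i j = P j i"
    and w: "(\<Sum>i<n. \<Sum>j<n. (w i j)\<^sup>2) \<le> 1" and r: "r > 0"
  shows "measure_pmf.prob (adj_pmf n P)
     {A. (\<Sum>i<n. \<Sum>j<n. w i j * (of_bool (A i j) - P i j)) \<ge> r} \<le> exp (- r\<^sup>2)"
proof -
  define I where "I = {(i, j). i \<le> j \<and> j < n}"
  define f where "f b i j = (if i \<le> j then b (i, j) else b (j, i))" for b :: "nat \<times> nat \<Rightarrow> bool" and i j
  define c where "c p = (if fst p = snd p then w (fst p) (fst p) else w (fst p) (snd p) + w (snd p) (fst p))"
    for p :: "nat \<times> nat"
  have fin: "finite I" unfolding I_def
    by (rule finite_subset[of _ "{..n} \<times> {..n}"]) auto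
  have adj: "adj_pmf n P = map_pmf f (Pi_pmf I False (\<lambda>p. bernoulli_pmf (P (fst p) (snd p))))"
    unfolding adj_pmf_def f_def I_def by (simp add: split_def)
  \<comment> \<open>By symmetry of \<open>A\<close> and \<open>P\<close>, the form is a sum of independent terms over the upper triangle.\<close>
  have form_eq: "(\<Sum>i<n. \<Sum>j<n. w i j * (of_bool (f b i j) - P i j))
      = (\<Sum>p\<in>I. c p * (of_bool (b p) - P (fst p) (snd p)))" for b
    unfolding I_def sum_square_eq_sum_upper_triangle
    by (intro sum.cong refl) (use P in \<open>auto simp: c_def f_def algebra_simps\<close>)
  have "(\<Sum>p\<in>I. (c p)\<^sup>2) \<le> (\<Sum>p\<in>I. if fst p = snd p then 2 * (w (fst p) (fst p))\<^sup>2
       else 2 * (w (fst p) (snd p))\<^sup>2 + 2 * (w (snd p) (fst p))\<^sup>2)"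
    by (intro sum_mono) (auto simp: c_def square_sum_le_twice_sum_squares)
  also have "\<dots> = (\<Sum>i<n. \<Sum>j<n. 2 * (w i j)\<^sup>2)"
    unfolding I_def by (rule sum_square_eq_sum_upper_triangle[symmetric])
  also have "\<dots> \<le> 2" using w by (simp add: sum_distrib_left[symmetric])
  finally have c_sq: "(\<Sum>p\<in>I. (c p)\<^sup>2) \<le> 2" .
  have "measure_pmf.prob (adj_pmf n P) {A. (\<Sum>i<n. \<Sum>j<n. w i j * (of_bool (A i j) - P i j)) \<ge> r}
     = measure_pmf.prob (Pi_pmf I False (\<lambda>p. bernoulli_pmf (P (fst p) (snd p))))
         {b. (\<Sum>p\<in>I. c p * (of_bool (b p) - P (fst p) (snd p))) \<ge> r}"
    unfolding adj by (simp add: form_eq vimage_def)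
  also have "\<dots> \<le> exp (- 2 * r\<^sup>2 / 2)"
    using P by (intro prob_weighted_bernoulli_sum_ge fin r c_sq) auto
  finally show ?thesis by simp
qed

lemma adj_dev_abs_le1:
  "\<forall>i j. 0 \<le> P i j \<and> P i j \<le> 1 \<and> P i j = P j i \<Longrightarrow> \<forall>i j. \<bar>of_bool (A i j) - P i j\<bar> \<le> (1::real)"
  by (auto simp: of_bool_def)

section \<open>The operator norm\<close>

lemma sum_sq_mult_vec_le_frobenius:
  fixes M :: "'a \<Rightarrow> 'b \<Rightarrow> real"
  assumes "(\<Sum>j\<in>C. (x j)\<^sup>2) \<le> 1"
  shows "(\<Sum>i\<in>I. (\<Sum>j\<in>C. M i j * x j)\<^sup>2) \<le> (\<Sum>i\<in>I. \<Sum>j\<in>C. (M i j)\<^sup>2)"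
proof (rule sum_mono)
  fix i
  have "(\<Sum>j\<in>C. M i j * x j)\<^sup>2 \<le> (\<Sum>j\<in>C. (M i j)\<^sup>2) * (\<Sum>j\<in>C. (x j)\<^sup>2)"
    by (rule Cauchy_Schwarz_ineq_sum)
  also have "\<dots> \<le> (\<Sum>j\<in>C. (M i j)\<^sup>2)"
    using mult_left_mono[OF assms, of "\<Sum>j\<in>C. (M i j)\<^sup>2"] by (simp add: sum_nonneg)
  finally show "(\<Sum>j\<in>C. M i j * x j)\<^sup>2 \<le> (\<Sum>j\<in>C. (M i j)\<^sup>2)" .
qed

lemma zero_mem_sq_mult_vec_set:
  fixes M :: "'a \<Rightarrow> 'b \<Rightarrow> real"
  shows "0 \<in> {\<Sum>i\<in>I. (\<Sum>j\<in>C. M i j * x j)\<^sup>2 | x. (\<Sum>j\<in>C. (x j)\<^sup>2) \<le> 1}"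
  by (rule CollectI, rule exI[of _ "\<lambda>_. 0"]) simp

lemma bdd_above_sq_mult_vec_set:
  fixes M :: "'a \<Rightarrow> 'b \<Rightarrow> real"
  shows "bdd_above {\<Sum>i\<in>I. (\<Sum>j\<in>C. M i j * x j)\<^sup>2 | x. (\<Sum>j\<in>C. (x j)\<^sup>2) \<le> 1}"
  using sum_sq_mult_vec_le_frobenius[where C=C and I=I and M=M]
  by (intro bdd_aboveI[of _ "\<Sum>i\<in>I. \<Sum>j\<in>C. (M i j)\<^sup>2"]) auto

lemma op_norm_le_frobenius: "op_norm I C M \<le> sqrt (\<Sum>i\<in>I. \<Sum>j\<in>C. (M i j)\<^sup>2)"
  unfolding op_norm_def
proof (rule cSup_least)
  show "{sqrt (\<Sum>i\<in>I. (\<Sum>j\<in>C. M i j * x j)\<^sup>2) | x. (\<Sum>j\<in>C. (x j)\<^sup>2) \<le> 1} \<noteq> {}"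
    using zero_mem_sq_mult_vec_set[where I=I and C=C and M=M] by auto
qed (auto intro: real_sqrt_le_mono sum_sq_mult_vec_le_frobenius)

lemma op_norm_nonneg: "0 \<le> op_norm I C M"
  unfolding op_norm_def
  by (rule cSup_upper2[of "sqrt 0"]) (use zero_mem_sq_mult_vec_set[where I=I and C=C and M=M] op_norm_le_frobenius
      in \<open>auto intro!: bdd_aboveI[of _ "sqrt (\<Sum>i\<in>I. \<Sum>j\<in>C. (M i j)\<^sup>2)"]
            real_sqrt_le_mono sum_sq_mult_vec_le_frobenius\<close>)

lemma op_norm_sq_le_Sup:
  "(op_norm I C M)\<^sup>2 \<le> Sup {\<Sum>i\<in>I. (\<Sum>j\<in>C. M i j * x j)\<^sup>2 | x. (\<Sum>j\<in>C. (x j)\<^sup>2) \<le> 1}"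
    (is "_ \<le> Sup ?Q")
proof -
  note zero = zero_mem_sq_mult_vec_set[where I=I and C=C and M=M] and bdd = bdd_above_sq_mult_vec_set[where I=I and C=C and M=M]
  have le: "op_norm I C M \<le> sqrt (Sup ?Q)"
    unfolding op_norm_def
  proof (rule cSup_least)
    show "{sqrt (\<Sum>i\<in>I. (\<Sum>j\<in>C. M i j * x j)\<^sup>2) | x. (\<Sum>j\<in>C. (x j)\<^sup>2) \<le> 1} \<noteq> {}"
      using zero by auto
  qed (auto intro!: cSup_upper[OF _ bdd])
  have "0 \<le> Sup ?Q" by (rule cSup_upper2[OF zero order_refl bdd])
  then show ?thesis
    using power_mono[OF le op_norm_nonneg, where n = 2] by simp
qed

lemma op_norm_zero [simp]: "op_norm I C (\<lambda>i j. 0) = 0"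
  using op_norm_le_frobenius[of I C "\<lambda>i j. 0"] op_norm_nonneg[of I C "\<lambda>i j. 0"] by simp

lemma sum_Sup_le:
  fixes S :: "'i \<Rightarrow> real set"
  assumes "finite I" and "\<And>i. i \<in> I \<Longrightarrow> S i \<noteq> {} \<and> bdd_above (S i)"
    and "\<And>y. (\<And>i. i \<in> I \<Longrightarrow> y i \<in> S i) \<Longrightarrow> (\<Sum>i\<in>I. y i) \<le> T"
  shows "(\<Sum>i\<in>I. Sup (S i)) \<le> T"
  using assms
proof (induction I arbitrary: T rule: finite_induct)
  case empty
  then show ?case by simp
next
  case (insert a I)
  have "s \<le> T - (\<Sum>i\<in>I. Sup (S i))" if s: "s \<in> S a" for s
  proof -
    have "(\<Sum>i\<in>I. Sup (S i)) \<le> T - s"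
    proof (rule insert.IH)
      fix y assume y: "\<And>i. i \<in> I \<Longrightarrow> y i \<in> S i"
      have "(\<Sum>i\<in>insert a I. (y(a := s)) i) \<le> T"
        using y s insert.hyps by (intro insert.prems(2)) auto
      moreover have "(\<Sum>i\<in>I. (y(a := s)) i) = (\<Sum>i\<in>I. y i)"
        using insert.hyps by (intro sum.cong) auto
      ultimately show "(\<Sum>i\<in>I. y i) \<le> T - s" using insert.hyps by simp
    qed (use insert.prems in auto)
    then show ?thesis by simp
  qed
  then have "Sup (S a) \<le> T - (\<Sum>i\<in>I. Sup (S i))"
    using insert.prems(1) by (intro cSup_least) auto
  then show ?case using insert.hyps by simp
qed

section \<open>Sparsity families and the block bilinear form\<close>

lemma sparsity_family_memD:
  assumes "sparsity_family n K z J" "i \<in> J k l"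
  shows "k < K" "l < K" "i < n" "z i = k"
proof -
  have "k < K \<and> l < K"
    using assms unfolding sparsity_family_def by (metis empty_iff not_le)
  moreover have "i \<in> comm n z k"
    using assms calculation unfolding sparsity_family_def by blast
  ultimately show "k < K" "l < K" "i < n" "z i = k" by (auto simp: comm_def)
qed

lemma sparsity_family_subset_comm: "sparsity_family n K z J \<Longrightarrow> J k l \<subseteq> comm n z k"
  using sparsity_family_memD[of n K z J _ k l] by (auto simp: comm_def)

lemma sparsity_family_finite: "sparsity_family n K z J \<Longrightarrow> finite (J k l)"
  by (rule finite_subset[OF sparsity_family_subset_comm]) (auto simp: comm_def)

lemma card_le_csize: "sparsity_family n K z J \<Longrightarrow> card (J k l) \<le> csize n z k"
  unfolding csize_def by (rule card_mono[OF _ sparsity_family_subset_comm]) (auto simp: comm_def)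

lemma sparsity_family_eqI:
  assumes "sparsity_family n K z J" "sparsity_family n K z J'"
    and "\<And>k l. k < K \<Longrightarrow> l < K \<Longrightarrow> J k l = J' k l"
  shows "J = J'"
  using assms unfolding sparsity_family_def by (metis ext not_le)

lemma sum_nodes_by_community:
  assumes "clustering n K z"
  shows "(\<Sum>j<n. f j) = (\<Sum>l<K. \<Sum>j\<in>comm n z l. f j)"
proof -
  have "(\<Sum>l<K. \<Sum>j | j \<in> {..<n} \<and> z j = l. f j) = sum f {..<n}"
    by (rule sum.group) (use assms in \<open>auto simp: clustering_def\<close>)
  then show ?thesis by (simp add: comm_def)
qed

text \<open>
  Encoding of one left and one right vector per block: \<open>u (i, l)\<close> is the entry at node \<open>i\<close> of
  the left vector of block \<open>(z i, l)\<close>, and \<open>v (k, j)\<close> the entry at node \<open>j\<close> of the right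
  vector of block \<open>(k, z j)\<close>; the supports confine both to \<open>J\<close>. Thus \<open>block_form\<close> is the sum
  over all blocks of \<open>u_kl\<^sup>T X(k,l) v_kl\<close>. The left vectors range jointly over one unit ball, the
  right vectors each over their own, so the supremum of the form is the square root of
  \<open>proj_op_sum\<close>.
\<close>

definition left_supp :: "nat \<Rightarrow> nat \<Rightarrow> (nat \<Rightarrow> nat) \<Rightarrow> (nat \<Rightarrow> nat \<Rightarrow> nat set) \<Rightarrow> (nat \<times> nat) set" where
  "left_supp n K z J = {(i, l). i < n \<and> l < K \<and> i \<in> J (z i) l}"

definition right_supp :: "nat \<Rightarrow> nat \<Rightarrow> (nat \<Rightarrow> nat) \<Rightarrow> (nat \<Rightarrow> nat \<Rightarrow> nat set) \<Rightarrow> (nat \<times> nat) set" where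
  "right_supp n K z J = {(k, j). k < K \<and> j < n \<and> j \<in> J (z j) k}"

definition left_ball :: "nat \<Rightarrow> nat \<Rightarrow> (nat \<Rightarrow> nat) \<Rightarrow> (nat \<Rightarrow> nat \<Rightarrow> nat set) \<Rightarrow> (nat \<times> nat \<Rightarrow> real) set" where
  "left_ball n K z J =
     {u. (\<forall>p. p \<notin> left_supp n K z J \<longrightarrow> u p = 0) \<and> (\<Sum>p\<in>left_supp n K z J. (u p)\<^sup>2) \<le> 1}"

definition right_ball :: "nat \<Rightarrow> nat \<Rightarrow> (nat \<Rightarrow> nat) \<Rightarrow> (nat \<Rightarrow> nat \<Rightarrow> nat set) \<Rightarrow> (nat \<times> nat \<Rightarrow> real) set" where
  "right_ball n K z J =
     {v. (\<forall>p. p \<notin> right_supp n K z J \<longrightarrow> v p = 0) \<and> (\<forall>k<K. \<forall>l<K. (\<Sum>j\<in>J l k. (v (k, j))\<^sup>2) \<le> 1)}"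

definition block_form :: "nat \<Rightarrow> (nat \<Rightarrow> nat) \<Rightarrow> (nat \<Rightarrow> nat \<Rightarrow> real) \<Rightarrow> (nat \<times> nat \<Rightarrow> real) \<Rightarrow> (nat \<times> nat \<Rightarrow> real) \<Rightarrow> real" where
  "block_form n z X u v = (\<Sum>i<n. \<Sum>j<n. u (i, z j) * v (z i, j) * X i j)"

lemma left_supp_subset: "left_supp n K z J \<subseteq> {..<n} \<times> {..<K}"
  by (auto simp: left_supp_def)

lemma finite_left_supp [simp]: "finite (left_supp n K z J)"
  by (rule finite_subset[OF left_supp_subset]) auto

lemma finite_right_supp [simp]: "finite (right_supp n K z J)"
  by (rule finite_subset[of _ "{..<K} \<times> {..<n}"]) (auto simp: right_supp_def)

lemma mem_left_supp_iff:
  "sparsity_family n K z J \<Longrightarrow> (i, l) \<in> left_supp n K z J \<longleftrightarrow> i \<in> J (z i) l"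
  using sparsity_family_memD[of n K z J i "z i" l] by (auto simp: left_supp_def)

lemma mem_right_supp_iff:
  "sparsity_family n K z J \<Longrightarrow> (k, j) \<in> right_supp n K z J \<longleftrightarrow> j \<in> J (z j) k"
  using sparsity_family_memD[of n K z J j "z j" k] by (auto simp: right_supp_def)

lemma sum_left_supp:
  assumes sf: "sparsity_family n K z J"
  shows "(\<Sum>p\<in>left_supp n K z J. g p) = (\<Sum>k<K. \<Sum>l<K. \<Sum>i\<in>J k l. g (i, l))"
proof -
  let ?S = "Sigma ({..<K} \<times> {..<K}) (\<lambda>kl. J (fst kl) (snd kl))"
  let ?h = "\<lambda>q::(nat \<times> nat) \<times> nat. (snd q, snd (fst q))"
  have inj: "inj_on ?h ?S"
    by (clarsimp simp: inj_on_def) (metis sparsity_family_memD(4)[OF sf])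
  have img: "?h ` ?S = left_supp n K z J"
  proof
    show "?h ` ?S \<subseteq> left_supp n K z J"
      using sparsity_family_memD[OF sf] by (auto simp: left_supp_def)
    show "left_supp n K z J \<subseteq> ?h ` ?S"
    proof
      fix p assume "p \<in> left_supp n K z J"
      then obtain i l where p: "p = (i, l)" "i \<in> J (z i) l" by (auto simp: left_supp_def)
      then have "((z i, l), i) \<in> ?S" using sparsity_family_memD[OF sf p(2)] by auto
      then show "p \<in> ?h ` ?S" using p by force
    qed
  qed
  have "(\<Sum>k<K. \<Sum>l<K. \<Sum>i\<in>J k l. g (i, l)) =
      (\<Sum>kl\<in>{..<K} \<times> {..<K}. \<Sum>i\<in>J (fst kl) (snd kl). g (i, snd kl))"
    unfolding sum.cartesian_product by (simp add: case_prod_beta)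
  also have "\<dots> = (\<Sum>q\<in>?S. g (?h q))"
    by (subst sum.Sigma) (auto simp: sparsity_family_finite[OF sf] case_prod_beta)
  also have "\<dots> = (\<Sum>p\<in>left_supp n K z J. g p)"
    using sum.reindex[OF inj, of g] img by (simp add: o_def)
  finally show ?thesis ..
qed

lemma sum_right_supp:
  assumes sf: "sparsity_family n K z J"
  shows "(\<Sum>p\<in>right_supp n K z J. g p) = (\<Sum>k<K. \<Sum>l<K. \<Sum>i\<in>J k l. g (l, i))"
proof -
  have "right_supp n K z J = prod.swap ` left_supp n K z J"
    by (auto simp: left_supp_def right_supp_def image_iff)
  then have "(\<Sum>p\<in>right_supp n K z J. g p) = (\<Sum>p\<in>left_supp n K z J. g (prod.swap p))"
    by (simp add: sum.reindex)
  then show ?thesis by (simp add: sum_left_supp[OF sf])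
qed

lemma card_left_supp: "sparsity_family n K z J \<Longrightarrow> card (left_supp n K z J) = Jcard K J"
  using sum_left_supp[of n K z J "\<lambda>_. 1::nat"] by (simp add: Jcard_def)

lemma card_right_supp: "sparsity_family n K z J \<Longrightarrow> card (right_supp n K z J) = Jcard K J"
  using sum_right_supp[of n K z J "\<lambda>_. 1::nat"] by (simp add: Jcard_def)

lemma abs_le_one_if_sum_sq_le_one:
  fixes f :: "'a \<Rightarrow> real"
  assumes "finite A" "p \<in> A" "(\<Sum>q\<in>A. (f q)\<^sup>2) \<le> 1"
  shows "\<bar>f p\<bar> \<le> 1"
proof -
  have "(f p)\<^sup>2 \<le> 1"
    using member_le_sum[of p A "\<lambda>q. (f q)\<^sup>2"] assms by simp
  then show ?thesis by (simp add: abs_square_le_1)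
qed

lemma left_ball_outside: "u \<in> left_ball n K z J \<Longrightarrow> p \<notin> left_supp n K z J \<Longrightarrow> u p = 0"
  unfolding left_ball_def by blast

lemma right_ball_outside: "v \<in> right_ball n K z J \<Longrightarrow> p \<notin> right_supp n K z J \<Longrightarrow> v p = 0"
  unfolding right_ball_def by blast

lemma left_ball_abs_le1: "u \<in> left_ball n K z J \<Longrightarrow> \<bar>u p\<bar> \<le> 1"
  using abs_le_one_if_sum_sq_le_one[of "left_supp n K z J" p u] left_ball_outside[of u n K z J p]
  by (cases "p \<in> left_supp n K z J") (auto simp: left_ball_def)

lemma right_ball_abs_le1:
  assumes sf: "sparsity_family n K z J" and v: "v \<in> right_ball n K z J"
  shows "\<bar>v p\<bar> \<le> 1"
proof (cases p)
  case (Pair k j)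
  show ?thesis
  proof (cases "p \<in> right_supp n K z J")
    case True
    then have j: "j \<in> J (z j) k" using mem_right_supp_iff[OF sf] Pair by simp
    then have "(\<Sum>j'\<in>J (z j) k. (v (k, j'))\<^sup>2) \<le> 1"
      using v sparsity_family_memD[OF sf j] by (auto simp: right_ball_def)
    then show ?thesis
      using abs_le_one_if_sum_sq_le_one[OF sparsity_family_finite[OF sf] j] Pair by simp
  qed (use right_ball_outside[OF v] in simp)
qed

lemma zero_mem_left_ball: "(\<lambda>_. 0) \<in> left_ball n K z J"
  by (simp add: left_ball_def)

lemma zero_mem_right_ball: "(\<lambda>_. 0) \<in> right_ball n K z J"
  by (simp add: right_ball_def)

lemma sum_sq_block_weights_le1:
  assumes cl: "clustering n K z" and sf: "sparsity_family n K z J"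
    and u: "u \<in> left_ball n K z J" and v: "v \<in> right_ball n K z J"
  shows "(\<Sum>i<n. \<Sum>j<n. (u (i, z j) * v (z i, j))\<^sup>2) \<le> 1"
proof -
  have row: "(\<Sum>j<n. (u (i, z j) * v (z i, j))\<^sup>2) \<le> (\<Sum>l<K. (u (i, l))\<^sup>2)" if i: "i < n" for i
  proof -
    have "(\<Sum>j<n. (u (i, z j) * v (z i, j))\<^sup>2) = (\<Sum>l<K. (u (i, l))\<^sup>2 * (\<Sum>j\<in>comm n z l. (v (z i, j))\<^sup>2))"
      unfolding sum_nodes_by_community[OF cl]
      by (intro sum.cong refl) (auto simp: comm_def power_mult_distrib sum_distrib_left)
    also have "\<dots> \<le> (\<Sum>l<K. (u (i, l))\<^sup>2 * 1)"
    proof (intro sum_mono mult_left_mono)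
      fix l assume l: "l \<in> {..<K}"
      have "(\<Sum>j\<in>comm n z l. (v (z i, j))\<^sup>2) = (\<Sum>j\<in>J l (z i). (v (z i, j))\<^sup>2)"
        using v mem_right_supp_iff[OF sf, of "z i"]
        by (intro sum.mono_neutral_right sparsity_family_subset_comm[OF sf])
           (auto simp: comm_def right_ball_def)
      also have "\<dots> \<le> 1" using v l cl i by (auto simp: right_ball_def clustering_def)
      finally show "(\<Sum>j\<in>comm n z l. (v (z i, j))\<^sup>2) \<le> 1" .
    qed auto
    finally show ?thesis by simp
  qed
  have "(\<Sum>i<n. \<Sum>j<n. (u (i, z j) * v (z i, j))\<^sup>2) \<le> (\<Sum>i<n. \<Sum>l<K. (u (i, l))\<^sup>2)"
    using row by (intro sum_mono) auto
  also have "\<dots> = (\<Sum>p\<in>{..<n} \<times> {..<K}. (u p)\<^sup>2)"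
    by (simp add: sum.cartesian_product)
  also have "\<dots> = (\<Sum>p\<in>left_supp n K z J. (u p)\<^sup>2)"
    using u left_supp_subset by (intro sum.mono_neutral_right) (auto simp: left_ball_def)
  also have "\<dots> \<le> 1" using u by (simp add: left_ball_def)
  finally show ?thesis .
qed

definition apply_right :: "nat \<Rightarrow> (nat \<Rightarrow> nat) \<Rightarrow> (nat \<Rightarrow> nat \<Rightarrow> real) \<Rightarrow> (nat \<times> nat \<Rightarrow> real) \<Rightarrow> nat \<times> nat \<Rightarrow> real" where
  "apply_right n z X v p = (\<Sum>j\<in>comm n z (snd p). X (fst p) j * v (z (fst p), j))"

lemma block_form_eq_sum_apply_right:
  assumes cl: "clustering n K z" and u: "\<And>p. p \<notin> left_supp n K z J \<Longrightarrow> u p = 0"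
  shows "block_form n z X u v = (\<Sum>p\<in>left_supp n K z J. u p * apply_right n z X v p)"
proof -
  have row: "(\<Sum>j<n. u (i, z j) * v (z i, j) * X i j) = (\<Sum>l<K. u (i, l) * apply_right n z X v (i, l))" for i
    unfolding sum_nodes_by_community[OF cl] apply_right_def
    by (intro sum.cong refl) (auto simp: sum_distrib_left comm_def algebra_simps intro!: sum.cong)
  have "block_form n z X u v = (\<Sum>p\<in>{..<n} \<times> {..<K}. u p * apply_right n z X v p)"
    by (simp add: block_form_def row sum.cartesian_product case_prod_beta)
  also have "\<dots> = (\<Sum>p\<in>left_supp n K z J. u p * apply_right n z X v p)"
    using u left_supp_subset by (intro sum.mono_neutral_right) auto
  finally show ?thesis .
qed

text \<open>Cauchy--Schwarz with equality: \<open>u\<close> is taken parallel to the vector \<open>apply_right n z X v\<close>.\<close>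

lemma sum_sq_apply_right_le:
  assumes cl: "clustering n K z"
    and T: "\<forall>u\<in>left_ball n K z J. \<forall>v\<in>right_ball n K z J. block_form n z X u v \<le> T"
    and v: "v \<in> right_ball n K z J"
  shows "(\<Sum>p\<in>left_supp n K z J. (apply_right n z X v p)\<^sup>2) \<le> T\<^sup>2"
proof -
  define S where "S = (\<Sum>p\<in>left_supp n K z J. (apply_right n z X v p)\<^sup>2)"
  have S0: "0 \<le> S" unfolding S_def by (simp add: sum_nonneg)
  show ?thesis
  proof (cases "S = 0")
    case False
    then have pos: "0 < S" using S0 by simp
    define u where "u p = (if p \<in> left_supp n K z J then apply_right n z X v p / sqrt S else 0)" for p
    have "(\<Sum>p\<in>left_supp n K z J. (u p)\<^sup>2) = (\<Sum>p\<in>left_supp n K z J. (apply_right n z X v p)\<^sup>2 / S)"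
      using pos by (intro sum.cong refl) (simp add: u_def power_divide)
    also have "\<dots> = 1" using pos by (simp add: S_def[symmetric] sum_divide_distrib[symmetric])
    finally have u_ball: "u \<in> left_ball n K z J" by (simp add: left_ball_def u_def)
    have "block_form n z X u v = (\<Sum>p\<in>left_supp n K z J. u p * apply_right n z X v p)"
      by (rule block_form_eq_sum_apply_right[OF cl]) (simp add: u_def)
    also have "\<dots> = S / sqrt S"
      by (simp add: u_def S_def sum_divide_distrib power2_eq_square)
    also have "\<dots> = sqrt S" using S0 by (simp add: real_div_sqrt)
    finally have "sqrt S \<le> T" using T u_ball v by metis
    then show ?thesis
      using power_mono[of "sqrt S" T 2] S0 by (simp add: S_def)
  qed (simp add: S_def)
qed

lemma sum_blocks_eq_sum_sq_apply_right:
  fixes x :: "nat \<Rightarrow> nat \<Rightarrow> nat \<Rightarrow> real"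
  assumes sf: "sparsity_family n K z J"
  defines "v \<equiv> \<lambda>p. if p \<in> right_supp n K z J then x (fst p) (z (snd p)) (snd p) else 0"
  shows "(\<Sum>k<K. \<Sum>l<K. \<Sum>i\<in>comm n z k. (\<Sum>j\<in>comm n z l. proj_block J k l X i j * x k l j)\<^sup>2)
    = (\<Sum>p\<in>left_supp n K z J. (apply_right n z X v p)\<^sup>2)"
proof -
  have block: "(\<Sum>i\<in>comm n z k. (\<Sum>j\<in>comm n z l. proj_block J k l X i j * x k l j)\<^sup>2)
      = (\<Sum>i\<in>J k l. (apply_right n z X v (i, l))\<^sup>2)" for k l
  proof (rule sum.mono_neutral_cong_right)
    show "finite (comm n z k)" by (simp add: comm_def)
    show "J k l \<subseteq> comm n z k" by (rule sparsity_family_subset_comm[OF sf])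
    show "\<forall>i\<in>comm n z k - J k l. (\<Sum>j\<in>comm n z l. proj_block J k l X i j * x k l j)\<^sup>2 = 0"
      by (simp add: proj_block_def)
    fix i assume i: "i \<in> J k l"
    have "(\<Sum>j\<in>comm n z l. proj_block J k l X i j * x k l j) = apply_right n z X v (i, l)"
      unfolding apply_right_def
    proof (intro sum.cong refl)
      fix j assume "j \<in> comm n z (snd (i, l))"
      then have "z j = l" by (simp add: comm_def)
      then show "proj_block J k l X i j * x k l j = X (fst (i, l)) j * v (z (fst (i, l)), j)"
        using i sparsity_family_memD(4)[OF sf i] mem_right_supp_iff[OF sf, of k j]
        by (auto simp: proj_block_def v_def)
    qed simp
    then show "(\<Sum>j\<in>comm n z l. proj_block J k l X i j * x k l j)\<^sup>2 = (apply_right n z X v (i, l))\<^sup>2"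
      by simp
  qed
  show ?thesis by (simp add: block sum_left_supp[OF sf])
qed

lemma glued_mem_right_ball:
  assumes sf: "sparsity_family n K z J"
    and x: "\<And>k l. k < K \<Longrightarrow> l < K \<Longrightarrow> (\<Sum>j\<in>comm n z l. (x k l j)\<^sup>2) \<le> 1"
  shows "(\<lambda>p. if p \<in> right_supp n K z J then x (fst p) (z (snd p)) (snd p) else 0) \<in> right_ball n K z J"
proof -
  define v where "v = (\<lambda>p. if p \<in> right_supp n K z J then x (fst p) (z (snd p)) (snd p) else 0)"
  have "(\<Sum>j\<in>J l k. (v (k, j))\<^sup>2) \<le> 1" if k: "k < K" and l: "l < K" for k l
  proof -
    have "(\<Sum>j\<in>J l k. (v (k, j))\<^sup>2) = (\<Sum>j\<in>J l k. (x k l j)\<^sup>2)"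
      using sparsity_family_memD(4)[OF sf] mem_right_supp_iff[OF sf]
      by (intro sum.cong) (auto simp: v_def)
    also have "\<dots> \<le> (\<Sum>j\<in>comm n z l. (x k l j)\<^sup>2)"
      by (rule sum_mono2) (use sparsity_family_subset_comm[OF sf, of l k] in \<open>auto simp: comm_def\<close>)
    also have "\<dots> \<le> 1" using x k l .
    finally show ?thesis .
  qed
  then have "v \<in> right_ball n K z J" by (simp add: right_ball_def v_def)
  then show ?thesis unfolding v_def .
qed

lemma proj_op_sum_le_sq_of_block_form_le:
  assumes cl: "clustering n K z" and sf: "sparsity_family n K z J"
    and T: "\<forall>u\<in>left_ball n K z J. \<forall>v\<in>right_ball n K z J. block_form n z X u v \<le> T"
  shows "proj_op_sum n z J K X \<le> T\<^sup>2"
proof -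
  define N where "N k l x = (\<Sum>i\<in>comm n z k. (\<Sum>j\<in>comm n z l. proj_block J k l X i j * x j)\<^sup>2)"
    for k l and x :: "nat \<Rightarrow> real"
  define Q where "Q kl = {N (fst kl) (snd kl) x | x. (\<Sum>j\<in>comm n z (snd kl). (x j)\<^sup>2) \<le> 1}" for kl
  have "proj_op_sum n z J K X \<le> (\<Sum>kl\<in>{..<K} \<times> {..<K}. Sup (Q kl))"
    unfolding proj_op_sum_def sum.cartesian_product Q_def N_def
    by (intro sum_mono) (simp add: case_prod_beta op_norm_sq_le_Sup)
  also have "\<dots> \<le> T\<^sup>2"
  proof (rule sum_Sup_le)
    fix kl
    show "Q kl \<noteq> {} \<and> bdd_above (Q kl)"
      using zero_mem_sq_mult_vec_set[where I = "comm n z (fst kl)" and C = "comm n z (snd kl)"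
          and M = "proj_block J (fst kl) (snd kl) X"]
        bdd_above_sq_mult_vec_set[where I = "comm n z (fst kl)" and C = "comm n z (snd kl)"
          and M = "proj_block J (fst kl) (snd kl) X"]
      unfolding Q_def N_def by auto
  next
    fix y assume y: "\<And>kl. kl \<in> {..<K} \<times> {..<K} \<Longrightarrow> y kl \<in> Q kl"
    have "\<forall>kl\<in>{..<K} \<times> {..<K}. \<exists>x.
        (\<Sum>j\<in>comm n z (snd kl). (x j)\<^sup>2) \<le> 1 \<and> y kl = N (fst kl) (snd kl) x"
      using y unfolding Q_def by blast
    then obtain x where x: "\<forall>kl\<in>{..<K} \<times> {..<K}.
        (\<Sum>j\<in>comm n z (snd kl). (x kl j)\<^sup>2) \<le> 1 \<and> y kl = N (fst kl) (snd kl) (x kl)"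
      by (rule bchoice[THEN exE])
    define v where "v p = (if p \<in> right_supp n K z J then x (fst p, z (snd p)) (snd p) else 0)" for p
    have "(\<Sum>kl\<in>{..<K} \<times> {..<K}. y kl) = (\<Sum>kl\<in>{..<K} \<times> {..<K}. N (fst kl) (snd kl) (x kl))"
      using x by (intro sum.cong) auto
    also have "\<dots> = (\<Sum>k<K. \<Sum>l<K. N k l (x (k, l)))"
      unfolding sum.cartesian_product by (simp add: case_prod_beta)
    also have "\<dots> = (\<Sum>p\<in>left_supp n K z J. (apply_right n z X v p)\<^sup>2)"
      unfolding N_def v_def by (rule sum_blocks_eq_sum_sq_apply_right[OF sf, where x = "\<lambda>k l. x (k, l)"])
    also have "\<dots> \<le> T\<^sup>2"
      unfolding v_def using x
      by (intro sum_sq_apply_right_le[OF cl T] glued_mem_right_ball[OF sf, where x = "\<lambda>k l. x (k, l)"]) auto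
    finally show "(\<Sum>kl\<in>{..<K} \<times> {..<K}. y kl) \<le> T\<^sup>2" .
  qed simp
  finally show ?thesis .
qed

section \<open>Finite nets by rounding\<close>

definition round_to_zero :: "real \<Rightarrow> int" where
  "round_to_zero r = (if 0 \<le> r then \<lfloor>r\<rfloor> else \<lceil>r\<rceil>)"

lemma round_to_zero_bounds:
  "\<bar>real_of_int (round_to_zero r)\<bar> \<le> \<bar>r\<bar> \<and> \<bar>r - real_of_int (round_to_zero r)\<bar> \<le> 1"
proof (cases "0 \<le> r")
  case True
  then have "round_to_zero r = \<lfloor>r\<rfloor>" "0 \<le> real_of_int \<lfloor>r\<rfloor>" by (simp_all add: round_to_zero_def)
  then show ?thesis using floor_correct[of r] by arith
next
  case False
  then have "round_to_zero r = \<lceil>r\<rceil>" "real_of_int \<lceil>r\<rceil> \<le> 0" by (simp_all add: round_to_zero_def)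
  then show ?thesis using ceiling_correct[of r] by arith
qed

lemma abs_round_to_zero_le: "\<bar>real_of_int (round_to_zero r)\<bar> \<le> \<bar>r\<bar>"
  using round_to_zero_bounds by blast

lemma abs_sub_round_to_zero_le: "\<bar>r - real_of_int (round_to_zero r)\<bar> \<le> 1"
  using round_to_zero_bounds by blast

definition grid_round :: "real \<Rightarrow> real \<Rightarrow> real" where
  "grid_round m r = real_of_int (round_to_zero (m * r)) / m"

lemma abs_grid_round_le:
  assumes "0 \<le> m" shows "\<bar>grid_round m r\<bar> \<le> \<bar>r\<bar>"
proof (cases "m = 0")
  case False
  have "\<bar>real_of_int (round_to_zero (m * r))\<bar> \<le> m * \<bar>r\<bar>"
    using abs_round_to_zero_le[of "m * r"] assms by (simp add: abs_mult)
  then show ?thesis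
    using assms False by (simp add: grid_round_def abs_div pos_divide_le_eq mult.commute)
qed (simp add: grid_round_def)

lemma sq_grid_round_le: "0 \<le> m \<Longrightarrow> (grid_round m r)\<^sup>2 \<le> r\<^sup>2"
  using abs_grid_round_le abs_le_square_iff by blast

lemma abs_sub_grid_round_le:
  assumes "0 < m" shows "\<bar>r - grid_round m r\<bar> \<le> 1 / m"
proof -
  have "r - grid_round m r = (m * r - real_of_int (round_to_zero (m * r))) / m"
    using assms by (simp add: grid_round_def field_simps)
  then show ?thesis
    using abs_sub_round_to_zero_le[of "m * r"] assms by (simp add: abs_div divide_right_mono)
qed

definition round_on :: "'a set \<Rightarrow> ('a \<Rightarrow> real) \<Rightarrow> ('a \<Rightarrow> real) \<Rightarrow> 'a \<Rightarrow> real" where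
  "round_on D m u p = (if p \<in> D then grid_round (m p) (u p) else 0)"

lemma sum_half_pow_abs: "(\<Sum>a\<in>{-int L..int L}. (1/2::real) ^ nat \<bar>a\<bar>) = 3 - 2 * (1/2) ^ L"
proof (induction L)
  case (Suc L)
  have split: "{-int (Suc L)..int (Suc L)} = insert (-int (Suc L)) (insert (int (Suc L)) {-int L..int L})"
    by auto
  have "nat (int L + 1) = Suc L" "nat (1 + int L) = Suc L" by auto
  then have "(\<Sum>a\<in>{-int (Suc L)..int (Suc L)}. (1/2::real) ^ nat \<bar>a\<bar>) =
      (1/2) ^ Suc L + ((1/2) ^ Suc L + (\<Sum>a\<in>{-int L..int L}. (1/2::real) ^ nat \<bar>a\<bar>))"
    unfolding split by (subst sum.insert; simp)+
  then show ?case using Suc by simp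
qed simp

text \<open>Weight each integer point \<open>g\<close> by \<open>2 ^ (L - \<Sum>p. |g p|)\<close>: points of the l1-ball get
  weight at least \<open>1\<close>, and the whole box has total weight at most \<open>2 ^ L * 3 ^ card D\<close>.\<close>

lemma card_int_l1_ball_le:
  assumes fin: "finite D"
  shows "card {g \<in> PiE D (\<lambda>_. {-int L..int L}). (\<Sum>p\<in>D. \<bar>g p\<bar>) \<le> int L} \<le> 2 ^ L * 3 ^ card D"
proof -
  let ?P = "PiE D (\<lambda>_. {-int L..int L})"
  let ?G = "{g \<in> ?P. (\<Sum>p\<in>D. \<bar>g p\<bar>) \<le> int L}"
  define wt where "wt g = (\<Prod>p\<in>D. (1/2::real) ^ nat \<bar>g p\<bar>)" for g :: "'a \<Rightarrow> int"
  have wt_ge: "1 \<le> 2 ^ L * wt g" if g: "g \<in> ?G" for g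
  proof -
    have "int (\<Sum>p\<in>D. nat \<bar>g p\<bar>) \<le> int L" using g by simp
    then have "(\<Sum>p\<in>D. nat \<bar>g p\<bar>) \<le> L" by (simp only: of_nat_le_iff)
    then have "(1/2::real) ^ L \<le> (1/2) ^ (\<Sum>p\<in>D. nat \<bar>g p\<bar>)"
      by (rule power_decreasing) simp_all
    also have "\<dots> = wt g" by (simp add: wt_def power_sum)
    finally show ?thesis by (simp add: power_one_over mult.commute pos_divide_le_eq)
  qed
  have "real (card ?G) = (\<Sum>g\<in>?G. 1)" by simp
  also have "\<dots> \<le> (\<Sum>g\<in>?G. 2 ^ L * wt g)" by (rule sum_mono) (rule wt_ge)
  also have "\<dots> \<le> (\<Sum>g\<in>?P. 2 ^ L * wt g)"
    using fin by (intro sum_mono2) (auto simp: wt_def intro!: finite_PiE mult_nonneg_nonneg prod_nonneg)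
  also have "\<dots> = 2 ^ L * (\<Prod>p\<in>D. \<Sum>a\<in>{-int L..int L}. (1/2::real) ^ nat \<bar>a\<bar>)"
    unfolding wt_def sum_distrib_left[symmetric] by (subst prod_sum_PiE[OF fin]) auto
  also have "\<dots> = 2 ^ L * (3 - 2 * (1/2) ^ L) ^ card D"
    by (simp add: sum_half_pow_abs)
  also have "\<dots> \<le> 2 ^ L * 3 ^ card D"
    using power_le_one[of "1/2::real" L] by (intro mult_left_mono power_mono) auto
  finally have "real (card ?G) \<le> real (2 ^ L * 3 ^ card D)" by simp
  then show ?thesis by (simp only: of_nat_le_iff)
qed

lemma sum_abs_le_sqrt_card:
  fixes f :: "'a \<Rightarrow> real"
  assumes "(\<Sum>p\<in>A. (f p)\<^sup>2) \<le> 1"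
  shows "(\<Sum>p\<in>A. \<bar>f p\<bar>) \<le> sqrt (real (card A))"
proof (rule real_le_rsqrt)
  have "(\<Sum>p\<in>A. \<bar>f p\<bar>)\<^sup>2 \<le> (\<Sum>p\<in>A. (f p)\<^sup>2) * card A"
    using sum_squared_le_sum_of_squares[of "\<lambda>p. \<bar>f p\<bar>" A] by simp
  also have "\<dots> \<le> card A" using assms by (intro mult_left_le_one_le) (auto simp: sum_nonneg)
  finally show "(\<Sum>p\<in>A. \<bar>f p\<bar>)\<^sup>2 \<le> real (card A)" .
qed

lemma card_round_on_image_le:
  assumes fin: "finite D" and m: "\<And>p. p \<in> D \<Longrightarrow> 0 \<le> m p"
    and S: "\<And>u. u \<in> S \<Longrightarrow> (\<Sum>p\<in>D. m p * \<bar>u p\<bar>) \<le> real L"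
  shows "finite (round_on D m ` S) \<and> card (round_on D m ` S) \<le> 2 ^ L * 3 ^ card D"
proof -
  let ?G = "{g \<in> PiE D (\<lambda>_. {-int L..int L}). (\<Sum>p\<in>D. \<bar>g p\<bar>) \<le> int L}"
  let ?phi = "\<lambda>g p. if p \<in> D then real_of_int (g p) / m p else 0"
  have sub: "round_on D m ` S \<subseteq> ?phi ` ?G"
  proof
    fix w assume "w \<in> round_on D m ` S"
    then obtain u where u: "u \<in> S" and w: "w = round_on D m u" by blast
    define g where "g = restrict (\<lambda>p. round_to_zero (m p * u p)) D"
    have "\<bar>real_of_int (g p)\<bar> \<le> m p * \<bar>u p\<bar>" if "p \<in> D" for p
      using abs_round_to_zero_le[of "m p * u p"] m[OF that] that by (simp add: g_def abs_mult)
    then have "real_of_int (\<Sum>p\<in>D. \<bar>g p\<bar>) \<le> (\<Sum>p\<in>D. m p * \<bar>u p\<bar>)"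
      by (simp add: sum_mono)
    then have sum_le: "(\<Sum>p\<in>D. \<bar>g p\<bar>) \<le> int L" using S[OF u] by linarith
    moreover have "g p \<in> {-int L..int L}" if "p \<in> D" for p
    proof -
      have "\<bar>g p\<bar> \<le> int L"
        using member_le_sum[OF that, of "\<lambda>p. \<bar>g p\<bar>"] sum_le fin by simp
      then show ?thesis by (simp add: abs_le_iff)
    qed
    ultimately have "g \<in> ?G" by (auto simp: g_def)
    moreover have "w = ?phi g" by (auto simp: w round_on_def grid_round_def g_def)
    ultimately show "w \<in> ?phi ` ?G" by blast
  qed
  have finG: "finite ?G"
    by (rule finite_subset[OF _ finite_PiE[OF fin, of "\<lambda>_. {-int L..int L}"]]) auto
  then have "card (round_on D m ` S) \<le> card ?G"
    using card_mono[OF _ sub] card_image_le[OF finG, of ?phi] by (meson finite_imageI le_trans)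
  also have "\<dots> \<le> 2 ^ L * 3 ^ card D" by (rule card_int_l1_ball_le[OF fin])
  finally show ?thesis using finite_subset[OF sub] finG by blast
qed

lemma sum_sq_le_one_if_abs_le:
  fixes e :: "'a \<Rightarrow> real"
  assumes "finite A" and "\<And>p. p \<in> A \<Longrightarrow> \<bar>e p\<bar> \<le> 1 / sqrt (real (card A))"
  shows "(\<Sum>p\<in>A. (e p)\<^sup>2) \<le> 1"
proof -
  have "(\<Sum>p\<in>A. (e p)\<^sup>2) \<le> (\<Sum>p\<in>A. (1 / sqrt (real (card A)))\<^sup>2)"
    using power_mono[OF assms(2) abs_ge_zero, of _ 2] by (intro sum_mono) simp
  also have "\<dots> \<le> 1" using assms(1) by (cases "A = {}") (simp_all add: power_divide)
  finally show ?thesis .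
qed

text \<open>The rounding scales are chosen so that the rounding error, magnified by \<open>4\<close>, stays in the
  ball, while the l1-mass of the rounded integer vector is at most \<open>4 |J|\<close>.\<close>

definition left_round :: "nat \<Rightarrow> nat \<Rightarrow> (nat \<Rightarrow> nat) \<Rightarrow> (nat \<Rightarrow> nat \<Rightarrow> nat set) \<Rightarrow> (nat \<times> nat \<Rightarrow> real) \<Rightarrow> nat \<times> nat \<Rightarrow> real" where
  "left_round n K z J = round_on (left_supp n K z J) (\<lambda>_. 4 * sqrt (real (Jcard K J)))"

definition right_round :: "nat \<Rightarrow> nat \<Rightarrow> (nat \<Rightarrow> nat) \<Rightarrow> (nat \<Rightarrow> nat \<Rightarrow> nat set) \<Rightarrow> (nat \<times> nat \<Rightarrow> real) \<Rightarrow> nat \<times> nat \<Rightarrow> real" where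
  "right_round n K z J = round_on (right_supp n K z J) (\<lambda>(k, j). 4 * sqrt (real (card (J (z j) k))))"

lemma left_ballI:
  assumes "\<And>p. p \<notin> left_supp n K z J \<Longrightarrow> u p = 0" and "(\<Sum>p\<in>left_supp n K z J. (u p)\<^sup>2) \<le> 1"
  shows "u \<in> left_ball n K z J"
  using assms by (simp add: left_ball_def)

lemma right_ballI:
  assumes "\<And>p. p \<notin> right_supp n K z J \<Longrightarrow> v p = 0"
    and "\<And>k l. k < K \<Longrightarrow> l < K \<Longrightarrow> (\<Sum>j\<in>J l k. (v (k, j))\<^sup>2) \<le> 1"
  shows "v \<in> right_ball n K z J"
  using assms by (simp add: right_ball_def)

lemma left_round_mem:
  assumes u: "u \<in> left_ball n K z J" shows "left_round n K z J u \<in> left_ball n K z J"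
proof (rule left_ballI)
  have "(\<Sum>p\<in>left_supp n K z J. (left_round n K z J u p)\<^sup>2) \<le> (\<Sum>p\<in>left_supp n K z J. (u p)\<^sup>2)"
    by (intro sum_mono) (simp add: left_round_def round_on_def sq_grid_round_le)
  also have "\<dots> \<le> 1" using u by (simp add: left_ball_def)
  finally show "(\<Sum>p\<in>left_supp n K z J. (left_round n K z J u p)\<^sup>2) \<le> 1" .
qed (simp add: left_round_def round_on_def)

lemma right_round_mem:
  assumes v: "v \<in> right_ball n K z J" shows "right_round n K z J v \<in> right_ball n K z J"
proof (rule right_ballI)
  fix k l assume "k < K" "l < K"
  have "(\<Sum>j\<in>J l k. (right_round n K z J v (k, j))\<^sup>2) \<le> (\<Sum>j\<in>J l k. (v (k, j))\<^sup>2)"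
    by (intro sum_mono) (simp add: right_round_def round_on_def sq_grid_round_le)
  also have "\<dots> \<le> 1" using v \<open>k < K\<close> \<open>l < K\<close> by (simp add: right_ball_def)
  finally show "(\<Sum>j\<in>J l k. (right_round n K z J v (k, j))\<^sup>2) \<le> 1" .
qed (simp add: right_round_def round_on_def)

lemma abs_four_mult_le:
  assumes "\<bar>e\<bar> \<le> 1 / (4 * s)" shows "\<bar>4 * e\<bar> \<le> 1 / (s::real)"
  using mult_left_mono[OF assms, of 4] by (simp add: abs_mult)

lemma left_round_error_mem:
  assumes sf: "sparsity_family n K z J" and u: "u \<in> left_ball n K z J"
  shows "(\<lambda>p. 4 * (u p - left_round n K z J u p)) \<in> left_ball n K z J"
proof (rule left_ballI)
  let ?D = "left_supp n K z J"
  show "(\<Sum>p\<in>?D. (4 * (u p - left_round n K z J u p))\<^sup>2) \<le> 1"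
  proof (rule sum_sq_le_one_if_abs_le)
    fix p assume p: "p \<in> ?D"
    then have "0 < card ?D" using card_gt_0_iff by fastforce
    then have "\<bar>u p - left_round n K z J u p\<bar> \<le> 1 / (4 * sqrt (real (card ?D)))"
      using p abs_sub_grid_round_le[of "4 * sqrt (real (card ?D))" "u p"]
      by (simp add: left_round_def round_on_def card_left_supp[OF sf])
    then show "\<bar>4 * (u p - left_round n K z J u p)\<bar> \<le> 1 / sqrt (real (card ?D))"
      by (rule abs_four_mult_le)
  qed simp
qed (use left_ball_outside[OF u] in \<open>simp add: left_round_def round_on_def\<close>)

lemma right_round_error_mem:
  assumes sf: "sparsity_family n K z J" and v: "v \<in> right_ball n K z J"
  shows "(\<lambda>p. 4 * (v p - right_round n K z J v p)) \<in> right_ball n K z J"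
proof (rule right_ballI)
  fix k l
  show "(\<Sum>j\<in>J l k. (4 * (v (k, j) - right_round n K z J v (k, j)))\<^sup>2) \<le> 1"
  proof (rule sum_sq_le_one_if_abs_le[OF sparsity_family_finite[OF sf]])
    fix j assume j: "j \<in> J l k"
    have zj: "z j = l" using sparsity_family_memD(4)[OF sf j] .
    then have supp: "(k, j) \<in> right_supp n K z J" using mem_right_supp_iff[OF sf] j by simp
    have "0 < card (J l k)" using j sparsity_family_finite[OF sf] card_gt_0_iff by blast
    then have "\<bar>v (k, j) - right_round n K z J v (k, j)\<bar> \<le> 1 / (4 * sqrt (real (card (J l k))))"
      using supp zj abs_sub_grid_round_le[of "4 * sqrt (real (card (J l k)))" "v (k, j)"]
      by (simp add: right_round_def round_on_def)
    then show "\<bar>4 * (v (k, j) - right_round n K z J v (k, j))\<bar> \<le> 1 / sqrt (real (card (J l k)))"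
      by (rule abs_four_mult_le)
  qed
qed (use right_ball_outside[OF v] in \<open>simp add: right_round_def round_on_def\<close>)

lemma card_left_round_image_le:
  assumes sf: "sparsity_family n K z J"
  shows "finite (left_round n K z J ` left_ball n K z J)
    \<and> card (left_round n K z J ` left_ball n K z J) \<le> 48 ^ Jcard K J"
proof -
  let ?D = "left_supp n K z J" and ?s = "Jcard K J"
  have "(\<Sum>p\<in>?D. 4 * sqrt (real ?s) * \<bar>u p\<bar>) \<le> real (4 * ?s)" if u: "u \<in> left_ball n K z J" for u
  proof -
    have "(\<Sum>p\<in>?D. 4 * sqrt (real ?s) * \<bar>u p\<bar>) = 4 * sqrt (real ?s) * (\<Sum>p\<in>?D. \<bar>u p\<bar>)"
      by (simp add: sum_distrib_left)
    also have "\<dots> \<le> 4 * sqrt (real ?s) * sqrt (real ?s)"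
      using sum_abs_le_sqrt_card[of u ?D] u
      by (intro mult_left_mono) (auto simp: card_left_supp[OF sf] left_ball_def)
    finally show ?thesis by (simp add: mult.assoc)
  qed
  then have "finite (left_round n K z J ` left_ball n K z J)
      \<and> card (left_round n K z J ` left_ball n K z J) \<le> 2 ^ (4 * ?s) * 3 ^ card ?D"
    unfolding left_round_def by (intro card_round_on_image_le) auto
  then show ?thesis by (simp add: card_left_supp[OF sf] power_mult power_mult_distrib[symmetric])
qed

lemma card_right_round_image_le:
  assumes sf: "sparsity_family n K z J"
  shows "finite (right_round n K z J ` right_ball n K z J)
    \<and> card (right_round n K z J ` right_ball n K z J) \<le> 48 ^ Jcard K J"
proof -
  let ?D = "right_supp n K z J" and ?s = "Jcard K J"
  let ?m = "\<lambda>(k, j). 4 * sqrt (real (card (J (z j) k)))"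
  have "(\<Sum>p\<in>?D. ?m p * \<bar>v p\<bar>) \<le> real (4 * ?s)" if v: "v \<in> right_ball n K z J" for v
  proof -
    have "(\<Sum>p\<in>?D. ?m p * \<bar>v p\<bar>) = (\<Sum>k<K. \<Sum>l<K. \<Sum>i\<in>J k l. 4 * sqrt (real (card (J k l))) * \<bar>v (l, i)\<bar>)"
      unfolding sum_right_supp[OF sf] using sparsity_family_memD(4)[OF sf]
      by (intro sum.cong refl) simp
    also have "\<dots> = (\<Sum>k<K. \<Sum>l<K. 4 * sqrt (real (card (J k l))) * (\<Sum>i\<in>J k l. \<bar>v (l, i)\<bar>))"
      by (simp add: sum_distrib_left)
    also have "\<dots> \<le> (\<Sum>k<K. \<Sum>l<K. 4 * sqrt (real (card (J k l))) * sqrt (real (card (J k l))))"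
    proof (intro sum_mono mult_left_mono)
      fix k l assume "k \<in> {..<K}" "l \<in> {..<K}"
      then have "(\<Sum>i\<in>J k l. (v (l, i))\<^sup>2) \<le> 1" using v by (simp add: right_ball_def)
      then show "(\<Sum>i\<in>J k l. \<bar>v (l, i)\<bar>) \<le> sqrt (real (card (J k l)))"
        by (rule sum_abs_le_sqrt_card)
    qed simp
    also have "\<dots> = real (4 * ?s)" by (simp add: Jcard_def sum_distrib_left mult.assoc)
    finally show ?thesis .
  qed
  then have "finite (right_round n K z J ` right_ball n K z J)
      \<and> card (right_round n K z J ` right_ball n K z J) \<le> 2 ^ (4 * ?s) * 3 ^ card ?D"
    unfolding right_round_def by (intro card_round_on_image_le) auto
  then show ?thesis by (simp add: card_right_supp[OF sf] power_mult power_mult_distrib[symmetric])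
qed

lemma block_form_split:
  "block_form n z X u v = block_form n z X a b + block_form n z X (\<lambda>p. 4 * (u p - a p)) v / 4
     + block_form n z X a (\<lambda>p. 4 * (v p - b p)) / 4"
proof -
  have "block_form n z X a b + block_form n z X (\<lambda>p. 4 * (u p - a p)) v / 4
      + block_form n z X a (\<lambda>p. 4 * (v p - b p)) / 4
    = (\<Sum>i<n. \<Sum>j<n. a (i, z j) * b (z i, j) * X i j + 4 * (u (i, z j) - a (i, z j)) * v (z i, j) * X i j / 4
          + a (i, z j) * (4 * (v (z i, j) - b (z i, j))) * X i j / 4)"
    by (simp add: block_form_def sum.distrib sum_divide_distrib)
  also have "\<dots> = block_form n z X u v"
    unfolding block_form_def by (intro sum.cong refl) (simp add: field_simps)
  finally show ?thesis by simp
qed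

lemma block_form_le_square:
  assumes sf: "sparsity_family n K z J" and X: "\<forall>i j. \<bar>X i j\<bar> \<le> 1"
    and u: "u \<in> left_ball n K z J" and v: "v \<in> right_ball n K z J"
  shows "block_form n z X u v \<le> real n * real n"
proof -
  have "block_form n z X u v \<le> (\<Sum>i<n. \<Sum>j<n. (1::real))"
    unfolding block_form_def
  proof (intro sum_mono)
    fix i j
    have "\<bar>u (i, z j) * v (z i, j) * X i j\<bar> \<le> 1"
      unfolding abs_mult using left_ball_abs_le1[OF u] right_ball_abs_le1[OF sf v] X
      by (intro mult_le_one) auto
    then show "u (i, z j) * v (z i, j) * X i j \<le> 1" by linarith
  qed
  then show ?thesis by simp
qed

text \<open>Split \<open>u\<close> and \<open>v\<close> into their roundings plus the rounding errors; the two error terms are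
  quarters of values of the form on the balls, so the supremum \<open>s\<close> of the form satisfies
  \<open>s \<le> R + s / 4 + s / 4\<close>.\<close>

lemma block_form_le_twice_net_bound:
  assumes sf: "sparsity_family n K z J" and X: "\<forall>i j. \<bar>X i j\<bar> \<le> 1"
    and R: "\<forall>u\<in>left_ball n K z J. \<forall>v\<in>right_ball n K z J.
              block_form n z X (left_round n K z J u) (right_round n K z J v) \<le> R"
  shows "\<forall>u\<in>left_ball n K z J. \<forall>v\<in>right_ball n K z J. block_form n z X u v \<le> 2 * R"
proof -
  let ?U = "left_ball n K z J" and ?V = "right_ball n K z J"
  let ?S = "{block_form n z X u v | u v. u \<in> ?U \<and> v \<in> ?V}"
  have in_S: "block_form n z X u v \<in> ?S" if "u \<in> ?U" "v \<in> ?V" for u v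
    using that by (intro CollectI exI conjI) auto
  have ne: "?S \<noteq> {}" using in_S[OF zero_mem_left_ball zero_mem_right_ball] by (metis empty_iff)
  have bdd: "bdd_above ?S"
  proof (rule bdd_aboveI)
    fix x assume "x \<in> ?S"
    then obtain u v where "x = block_form n z X u v" "u \<in> ?U" "v \<in> ?V" by blast
    then show "x \<le> real n * real n" using block_form_le_square[OF sf X] by simp
  qed
  have mem: "block_form n z X u v \<le> Sup ?S" if "u \<in> ?U" "v \<in> ?V" for u v
    by (rule cSup_upper[OF in_S[OF that] bdd])
  have step: "block_form n z X u v \<le> R + Sup ?S / 4 + Sup ?S / 4" if u: "u \<in> ?U" and v: "v \<in> ?V" for u v
  proof -
    let ?a = "left_round n K z J u" and ?b = "right_round n K z J v"
    have "block_form n z X ?a ?b \<le> R" using R u v by blast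
    moreover have "block_form n z X (\<lambda>p. 4 * (u p - ?a p)) v \<le> Sup ?S"
      by (rule mem[OF left_round_error_mem[OF sf u] v])
    moreover have "block_form n z X ?a (\<lambda>p. 4 * (v p - ?b p)) \<le> Sup ?S"
      by (rule mem[OF left_round_mem[OF u] right_round_error_mem[OF sf v]])
    ultimately show ?thesis using block_form_split[of n z X u v ?a ?b] by linarith
  qed
  have "Sup ?S \<le> R + Sup ?S / 4 + Sup ?S / 4"
  proof (rule cSup_least[OF ne])
    fix x assume "x \<in> ?S"
    then obtain u v where "x = block_form n z X u v" "u \<in> ?U" "v \<in> ?V" by blast
    then show "x \<le> R + Sup ?S / 4 + Sup ?S / 4" using step by simp
  qed
  then have "Sup ?S \<le> 2 * R" by linarith
  then show ?thesis using mem by (meson order_trans)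
qed

lemma proj_op_sum_gt_imp_net_form_ge:
  assumes cl: "clustering n K z" and sf: "sparsity_family n K z J" and X: "\<forall>i j. \<bar>X i j\<bar> \<le> 1"
    and \<tau>: "0 \<le> \<tau>" and gt: "proj_op_sum n z J K X > \<tau>"
  shows "\<exists>a\<in>left_round n K z J ` left_ball n K z J. \<exists>b\<in>right_round n K z J ` right_ball n K z J.
    block_form n z X a b \<ge> sqrt \<tau> / 2"
proof (rule ccontr)
  assume "\<not> ?thesis"
  then have "\<forall>u\<in>left_ball n K z J. \<forall>v\<in>right_ball n K z J.
      block_form n z X (left_round n K z J u) (right_round n K z J v) \<le> sqrt \<tau> / 2"
    by (auto simp: not_le intro: less_imp_le)
  then have "\<forall>u\<in>left_ball n K z J. \<forall>v\<in>right_ball n K z J. block_form n z X u v \<le> 2 * (sqrt \<tau> / 2)"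
    by (rule block_form_le_twice_net_bound[OF sf X])
  then have "proj_op_sum n z J K X \<le> (2 * (sqrt \<tau> / 2))\<^sup>2"
    by (rule proj_op_sum_le_sq_of_block_form_le[OF cl sf])
  then show False using gt \<tau> by simp
qed

section \<open>Tail bound for a fixed model\<close>

lemma prob_proj_op_sum_gt_le:
  assumes P: "\<forall>i j. 0 \<le> P i j \<and> P i j \<le> 1 \<and> P i j = P j i"
    and cl: "clustering n K z" and sf: "sparsity_family n K z J" and \<tau>: "\<tau> > 0"
  shows "measure_pmf.prob (adj_pmf n P) {A. proj_op_sum n z J K (\<lambda>i j. of_bool (A i j) - P i j) > \<tau>}
     \<le> 48 ^ (2 * Jcard K J) * exp (- \<tau> / 4)"
proof -
  let ?Net = "left_round n K z J ` left_ball n K z J \<times> right_round n K z J ` right_ball n K z J"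
  let ?X = "\<lambda>A i j. of_bool (A i j) - P i j"
  let ?E = "\<lambda>ab. {A. block_form n z (?X A) (fst ab) (snd ab) \<ge> sqrt \<tau> / 2}"
  have sub: "{A. proj_op_sum n z J K (?X A) > \<tau>} \<subseteq> (\<Union>ab\<in>?Net. ?E ab)"
    using proj_op_sum_gt_imp_net_form_ge[OF cl sf adj_dev_abs_le1[OF P]] \<tau> by fastforce
  have each: "measure_pmf.prob (adj_pmf n P) (?E ab) \<le> exp (- \<tau> / 4)" if ab: "ab \<in> ?Net" for ab
  proof -
    have "fst ab \<in> left_ball n K z J" "snd ab \<in> right_ball n K z J"
      using ab left_round_mem right_round_mem by auto
    then have "(\<Sum>i<n. \<Sum>j<n. (fst ab (i, z j) * snd ab (z i, j))\<^sup>2) \<le> 1"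
      by (rule sum_sq_block_weights_le1[OF cl sf])
    from prob_adj_linear_form_ge[OF P this, of "sqrt \<tau> / 2"] \<tau>
    show ?thesis by (simp add: block_form_def mult.assoc power_divide)
  qed
  have card: "card ?Net \<le> 48 ^ (2 * Jcard K J)"
  proof -
    have "card ?Net = card (left_round n K z J ` left_ball n K z J) * card (right_round n K z J ` right_ball n K z J)"
      by (rule card_cartesian_product)
    also have "\<dots> \<le> 48 ^ Jcard K J * 48 ^ Jcard K J"
      using card_left_round_image_le[OF sf] card_right_round_image_le[OF sf] by (intro mult_mono) auto
    finally show ?thesis by (simp add: mult_2 power_add)
  qed
  have fin: "finite ?Net"
    using card_left_round_image_le[OF sf] card_right_round_image_le[OF sf] by simp
  have "measure_pmf.prob (adj_pmf n P) {A. proj_op_sum n z J K (?X A) > \<tau>}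
      \<le> measure_pmf.prob (adj_pmf n P) (\<Union>ab\<in>?Net. ?E ab)"
    by (rule measure_pmf.finite_measure_mono[OF sub]) simp
  also have "\<dots> \<le> (\<Sum>ab\<in>?Net. measure_pmf.prob (adj_pmf n P) (?E ab))"
    by (rule measure_pmf.finite_measure_subadditive_finite[OF fin]) simp
  also have "\<dots> \<le> real (card ?Net) * exp (- \<tau> / 4)"
    using sum_mono[of ?Net _ "\<lambda>_. exp (- \<tau> / 4)", OF each] by simp
  also have "\<dots> \<le> 48 ^ (2 * Jcard K J) * exp (- \<tau> / 4)"
    using card by (intro mult_right_mono) (simp_all flip: of_nat_le_iff)
  finally show ?thesis .
qed

section \<open>Counting sparsity families\<close>

lemma power_div_fact_le_exp: "0 \<le> x \<Longrightarrow> x ^ n / fact n \<le> exp (x::real)"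
proof -
  assume "0 \<le> x"
  have s: "(\<lambda>k. x ^ k /\<^sub>R fact k) sums exp x" by (rule exp_converges)
  have "sum (\<lambda>k. x ^ k /\<^sub>R fact k) {n} \<le> suminf (\<lambda>k. x ^ k /\<^sub>R fact k)"
    by (rule sum_le_suminf[OF sums_summable[OF s]]) (use \<open>0 \<le> x\<close> in auto)
  then show ?thesis using sums_unique[OF s] by (simp add: divide_inverse mult.commute)
qed

lemma binomial_le_exp_pow:
  assumes "0 < s"
  shows "real (N choose s) \<le> (real N * exp 1 / real s) ^ s"
proof -
  have "real (N choose s) * fact s \<le> real N ^ s"
    using binomial_fact_pow[of N s] by (metis of_nat_fact of_nat_le_iff of_nat_mult of_nat_power)
  then have "real (N choose s) \<le> real N ^ s / fact s" by (simp add: le_divide_eq)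
  also have "\<dots> \<le> real N ^ s * exp (real s) / real s ^ s"
  proof -
    have "real s ^ s \<le> exp (real s) * fact s"
      using power_div_fact_le_exp[of "real s" s] by (simp add: divide_le_eq)
    then have "real N ^ s * real s ^ s \<le> real N ^ s * (exp (real s) * fact s)"
      by (intro mult_left_mono) auto
    then show ?thesis using assms by (simp add: divide_simps mult_ac)
  qed
  also have "\<dots> = (real N * exp 1 / real s) ^ s"
    by (simp add: power_divide power_mult_distrib exp_of_nat_mult[symmetric])
  finally show ?thesis .
qed

text \<open>Union-bound weight of a set of \<open>s\<close> entries: \<open>48 ^ (2 * s)\<close> bounds the product of the two
  net sizes, and \<open>26 = (100 + 4) / 4\<close> is what survives of the penalty in the tail bound.\<close>

definition model_weight :: "nat \<Rightarrow> nat \<Rightarrow> real" where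
  "model_weight m s = 48 ^ (2 * s) * exp (- (26 * (real s * ln (real m * exp 1 / real s))))"

lemma model_weight_0 [simp]: "model_weight m 0 = 1"
  by (simp add: model_weight_def)

lemma model_weight_nonneg: "0 \<le> model_weight m s"
  by (simp add: model_weight_def)

lemma binomial_mult_model_weight_le:
  assumes s1: "1 \<le> s" and sN: "s \<le> N"
  shows "real (N choose s) * model_weight N s \<le> (1/2) ^ s"
proof -
  define L where "L = ln (real N * exp 1 / real s)"
  have x1: "exp 1 \<le> real N * exp 1 / real s" using s1 sN by (simp add: field_simps)
  then have L1: "1 \<le> L" unfolding L_def by (subst ln_ge_iff) (auto intro: less_le_trans[OF exp_gt_zero])
  have "real (N choose s) \<le> exp (real s * L)"
    using binomial_le_exp_pow[of s N] s1 x1 exp_of_nat_mult[of s L]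
    by (simp add: L_def less_le_trans[OF exp_gt_zero])
  then have "real (N choose s) * model_weight N s \<le> exp (real s * L) * model_weight N s"
    by (intro mult_right_mono) (simp_all add: model_weight_nonneg)
  also have "\<dots> = 2304 ^ s * exp (- (25 * (real s * L)))"
  proof -
    have "model_weight N s = 2304 ^ s * exp (- (26 * (real s * L)))"
      unfolding model_weight_def L_def by (simp add: power_mult)
    then show ?thesis by (simp add: mult.left_commute exp_add[symmetric])
  qed
  also have "\<dots> \<le> 2304 ^ s * exp (- (25 * real s))"
    using L1 s1 by (intro mult_left_mono) auto
  also have "\<dots> = (2304 * exp (-25)) ^ s"
    by (simp add: power_mult_distrib exp_of_nat_mult[symmetric] mult.commute)
  also have "\<dots> \<le> (1/2) ^ s"
  proof (intro power_mono)
    have "(2::real) ^ 25 \<le> exp 1 ^ 25"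
      by (intro power_mono) (use exp_ge_add_one_self[of 1] in auto)
    then have "4608 \<le> exp (25::real)" using exp_of_nat_mult[of 25 "1::real"] by simp
    then show "2304 * exp (-25) \<le> (1/2::real)" by (simp add: exp_minus field_simps)
  qed simp
  finally show ?thesis .
qed

lemma sum_half_powers: "(\<Sum>s\<in>{1..N}. (1/2::real) ^ s) = 1 - (1/2) ^ N"
  by (induction N) (auto simp: atLeastAtMostSuc_conv)

lemma sum_Pow_card:
  fixes f :: "nat \<Rightarrow> real"
  assumes fin: "finite X"
  shows "(\<Sum>S\<in>Pow X. f (card S)) = (\<Sum>s\<le>card X. real (card X choose s) * f s)"
proof -
  have layer: "(\<Sum>S\<in>{S \<in> Pow X. card S = s}. f (card S)) = real (card X choose s) * f s" for s
  proof -
    have "{S \<in> Pow X. card S = s} = {S. S \<subseteq> X \<and> card S = s}" by auto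
    then have c: "card {S \<in> Pow X. card S = s} = card X choose s" using n_subsets[OF fin] by simp
    have "(\<Sum>S\<in>{S \<in> Pow X. card S = s}. f (card S)) = (\<Sum>S\<in>{S \<in> Pow X. card S = s}. f s)"
      by (rule sum.cong) auto
    then show ?thesis using c by simp
  qed
  have "(\<Sum>S\<in>Pow X. f (card S)) = (\<Sum>s\<in>{..card X}. \<Sum>S\<in>{S \<in> Pow X. card S = s}. f (card S))"
    by (rule sum.group[symmetric]) (use fin in \<open>auto intro: card_mono\<close>)
  also have "\<dots> = (\<Sum>s\<le>card X. real (card X choose s) * f s)"
    by (rule sum.cong[OF refl]) (rule layer)
  finally show ?thesis .
qed

lemma finite_sparsity_families: "finite {J. sparsity_family n K z J}"
proof -
  let ?B = "{..<K} \<times> {..<K}"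
  let ?m = "\<lambda>f k l. if k < K \<and> l < K then f (k, l) else ({}::nat set)"
  have "{J. sparsity_family n K z J} \<subseteq> ?m ` PiE ?B (\<lambda>_. Pow {..<n})"
  proof
    fix J assume "J \<in> {J. sparsity_family n K z J}"
    then have sf: "sparsity_family n K z J" by simp
    have "J = ?m (restrict (\<lambda>p. J (fst p) (snd p)) ?B)"
      using sf unfolding sparsity_family_def by (intro ext) auto
    moreover have "restrict (\<lambda>p. J (fst p) (snd p)) ?B \<in> PiE ?B (\<lambda>_. Pow {..<n})"
      using sparsity_family_memD(3)[OF sf] by auto
    ultimately show "J \<in> ?m ` PiE ?B (\<lambda>_. Pow {..<n})" by blast
  qed
  moreover have "finite (?m ` PiE ?B (\<lambda>_. Pow {..<n}))" by (intro finite_imageI finite_PiE) auto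
  ultimately show ?thesis by (rule finite_subset)
qed

lemma inj_on_left_supp: "inj_on (left_supp n K z) {J. sparsity_family n K z J}"
proof (rule inj_onI)
  fix J J' assume "J \<in> {J. sparsity_family n K z J}" "J' \<in> {J. sparsity_family n K z J}"
    and eq: "left_supp n K z J = left_supp n K z J'"
  then have sf: "sparsity_family n K z J" and sf': "sparsity_family n K z J'" by auto
  have mem: "i \<in> J k l \<longleftrightarrow> (i, l) \<in> left_supp n K z J \<and> z i = k" if "sparsity_family n K z J" for J i k l
    using sparsity_family_memD[OF that, of i k l] mem_left_supp_iff[OF that, of i l] by auto
  show "J = J'"
    by (rule sparsity_family_eqI[OF sf sf']) (use mem[OF sf] mem[OF sf'] eq in blast)
qed

text \<open>Sparsity families correspond injectively to subsets of the \<open>n K\<close> pairs (node, community), so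
  their weights sum to at most \<open>\<Sum>s \<ge> 1. 2 ^ - s = 1\<close>.\<close>

lemma sum_model_weight_sparsity_families_le1:
  "(\<Sum>J\<in>{J. sparsity_family n K z J \<and> 1 \<le> Jcard K J}. model_weight (n * K) (Jcard K J)) \<le> 1"
proof -
  let ?SF = "{J. sparsity_family n K z J}" and ?X = "{..<n} \<times> {..<K}"
  define g where "g s = (if 1 \<le> s then model_weight (n * K) s else 0)" for s
  have g0: "0 \<le> g s" for s by (simp add: g_def model_weight_nonneg)
  have "(\<Sum>J\<in>{J. sparsity_family n K z J \<and> 1 \<le> Jcard K J}. model_weight (n * K) (Jcard K J))
      = (\<Sum>J\<in>?SF. g (card (left_supp n K z J)))"
    by (rule sum.mono_neutral_cong_left)
       (auto simp: finite_sparsity_families g_def card_left_supp)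
  also have "\<dots> = (\<Sum>S\<in>left_supp n K z ` ?SF. g (card S))"
    by (rule sum.reindex[OF inj_on_left_supp, symmetric, unfolded o_def])
  also have "\<dots> \<le> (\<Sum>S\<in>Pow ?X. g (card S))"
    by (intro sum_mono2) (auto simp: g0 left_supp_def)
  also have "\<dots> = (\<Sum>s\<le>n * K. real (n * K choose s) * g s)"
    by (simp add: sum_Pow_card card_cartesian_product)
  also have "\<dots> \<le> (\<Sum>s\<le>n * K. if 1 \<le> s then (1/2::real) ^ s else 0)"
    by (intro sum_mono) (simp add: g_def binomial_mult_model_weight_le)
  also have "\<dots> = (\<Sum>s\<in>{1..n * K}. (1/2::real) ^ s)"
    by (rule sum.mono_neutral_cong_right) auto
  also have "\<dots> \<le> 1" using sum_half_powers[of "n * K"] by simp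
  finally show ?thesis .
qed

lemma sum_model_weight_subsets_le:
  assumes fin: "finite C"
  shows "(\<Sum>S\<in>Pow C. if S = {} \<or> 2 \<le> card S then model_weight (card C) (card S) else 0)
    \<le> max 1 (real (card C))"
proof -
  let ?m = "card C"
  define psi where "psi s = (if s = 0 \<or> 2 \<le> s then model_weight ?m s else 0)" for s
  have "(\<Sum>S\<in>Pow C. if S = {} \<or> 2 \<le> card S then model_weight ?m (card S) else 0) = (\<Sum>S\<in>Pow C. psi (card S))"
    using fin by (intro sum.cong refl) (auto simp: psi_def dest: finite_subset)
  also have "\<dots> = (\<Sum>s\<le>?m. real (?m choose s) * psi s)" by (rule sum_Pow_card[OF fin])
  also have "\<dots> = 1 + (\<Sum>s\<in>{1..?m}. real (?m choose s) * psi s)"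
    by (simp add: psi_def atMost_atLeast0 sum.atLeast_Suc_atMost)
  also have "\<dots> \<le> 1 + (\<Sum>s\<in>{1..?m}. if 2 \<le> s then (1/2::real) ^ s else 0)"
    by (intro add_left_mono sum_mono) (auto simp: psi_def binomial_mult_model_weight_le)
  also have "\<dots> \<le> max 1 (real ?m)"
  proof (cases "?m \<le> 1")
    case True
    then have "(\<Sum>s\<in>{1..?m}. if 2 \<le> s then (1/2::real) ^ s else 0) = 0" by (intro sum.neutral) auto
    then show ?thesis by simp
  next
    case False
    have "(\<Sum>s\<in>{1..?m}. if 2 \<le> s then (1/2::real) ^ s else 0) \<le> (\<Sum>s\<in>{1..?m}. (1/2::real) ^ s)"
      by (intro sum_mono) auto
    also have "\<dots> \<le> 1" using sum_half_powers[of ?m] by simp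
    finally show ?thesis using False by simp
  qed
  finally show ?thesis .
qed

text \<open>Blocks with exactly
  one row are excluded: for a community of size \<open>1\<close> the bound \<open>max 1 n\<^sub>k = 1\<close> leaves no room
  for nonempty blocks.\<close>

lemma sum_sparsity_families_prod_le:
  fixes \<phi> :: "nat \<times> nat \<Rightarrow> nat set \<Rightarrow> real"
  assumes \<phi>: "\<And>p S. 0 \<le> \<phi> p S"
  shows "(\<Sum>J\<in>{J. sparsity_family n K z J}. \<Prod>p\<in>{..<K} \<times> {..<K}. \<phi> p (J (fst p) (snd p)))
    \<le> (\<Prod>p\<in>{..<K} \<times> {..<K}. \<Sum>S\<in>Pow (comm n z (fst p)). \<phi> p S)"
proof -
  let ?B = "{..<K} \<times> {..<K}" and ?SF = "{J. sparsity_family n K z J}"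
  let ?Sets = "\<lambda>p. Pow (comm n z (fst p))"
  define R where "R J = restrict (\<lambda>p. J (fst p) (snd p)) ?B" for J :: "nat \<Rightarrow> nat \<Rightarrow> nat set"
  have inj: "inj_on R ?SF"
  proof (rule inj_onI)
    fix J J' assume J: "J \<in> ?SF" and J': "J' \<in> ?SF" and eq: "R J = R J'"
    show "J = J'"
    proof (rule sparsity_family_eqI)
      show "sparsity_family n K z J" "sparsity_family n K z J'" using J J' by auto
      fix k l assume "k < K" "l < K"
      then show "J k l = J' k l" using fun_cong[OF eq, of "(k, l)"] by (simp add: R_def)
    qed
  qed
  have img: "R ` ?SF \<subseteq> PiE ?B ?Sets"
  proof
    fix f assume "f \<in> R ` ?SF"
    then obtain J where sf: "sparsity_family n K z J" and f: "f = R J" by blast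
    have "\<forall>p\<in>?B. J (fst p) (snd p) \<in> ?Sets p" using sparsity_family_subset_comm[OF sf] by blast
    then show "f \<in> PiE ?B ?Sets" unfolding f R_def by (simp only: restrict_PiE_iff)
  qed
  have "(\<Sum>J\<in>?SF. \<Prod>p\<in>?B. \<phi> p (J (fst p) (snd p))) = (\<Sum>f\<in>R ` ?SF. \<Prod>p\<in>?B. \<phi> p (f p))"
    by (subst sum.reindex[OF inj]) (auto simp: R_def intro!: sum.cong prod.cong)
  also have "\<dots> \<le> (\<Sum>f\<in>PiE ?B ?Sets. \<Prod>p\<in>?B. \<phi> p (f p))"
    using img by (intro sum_mono2 finite_PiE prod_nonneg \<phi>) (auto simp: comm_def)
  also have "\<dots> = (\<Prod>p\<in>?B. \<Sum>S\<in>?Sets p. \<phi> p S)"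
    by (rule prod_sum_PiE[symmetric]) (auto simp: comm_def)
  finally show ?thesis .
qed

lemma sum_prod_model_weight_le:
  "(\<Sum>J\<in>{J. sparsity_family n K z J \<and> (\<forall>k l. J k l = {} \<or> 2 \<le> card (J k l))}.
      \<Prod>p\<in>{..<K} \<times> {..<K}. model_weight (csize n z (fst p)) (card (J (fst p) (snd p))))
    \<le> (\<Prod>k<K. (max 1 (real (csize n z k))) ^ K)"
proof -
  let ?B = "{..<K} \<times> {..<K}"
  define \<phi> where "\<phi> p S = (if S = {} \<or> 2 \<le> card S then model_weight (csize n z (fst p)) (card S) else 0)"
    for p :: "nat \<times> nat" and S :: "nat set"
  have \<phi>0: "0 \<le> \<phi> p S" for p S by (simp add: \<phi>_def model_weight_nonneg)
  have "(\<Sum>J\<in>{J. sparsity_family n K z J \<and> (\<forall>k l. J k l = {} \<or> 2 \<le> card (J k l))}.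
      \<Prod>p\<in>?B. model_weight (csize n z (fst p)) (card (J (fst p) (snd p))))
      = (\<Sum>J\<in>{J. sparsity_family n K z J \<and> (\<forall>k l. J k l = {} \<or> 2 \<le> card (J k l))}.
          \<Prod>p\<in>?B. \<phi> p (J (fst p) (snd p)))"
    by (intro sum.cong refl prod.cong) (auto simp: \<phi>_def)
  also have "\<dots> \<le> (\<Sum>J\<in>{J. sparsity_family n K z J}. \<Prod>p\<in>?B. \<phi> p (J (fst p) (snd p)))"
    by (rule sum_mono2) (auto simp: finite_sparsity_families \<phi>0 intro: prod_nonneg)
  also have "\<dots> \<le> (\<Prod>p\<in>?B. \<Sum>S\<in>Pow (comm n z (fst p)). \<phi> p S)"
    by (rule sum_sparsity_families_prod_le[OF \<phi>0])
  also have "\<dots> \<le> (\<Prod>p\<in>?B. max 1 (real (csize n z (fst p))))"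
  proof (rule prod_mono)
    fix p
    have "(\<Sum>S\<in>Pow (comm n z (fst p)). \<phi> p S) \<le> max 1 (real (csize n z (fst p)))"
      unfolding \<phi>_def csize_def by (rule sum_model_weight_subsets_le) (simp add: comm_def)
    then show "0 \<le> (\<Sum>S\<in>Pow (comm n z (fst p)). \<phi> p S) \<and>
        (\<Sum>S\<in>Pow (comm n z (fst p)). \<phi> p S) \<le> max 1 (real (csize n z (fst p)))"
      by (simp add: sum_nonneg \<phi>0)
  qed
  also have "\<dots> = (\<Prod>k<K. \<Prod>l<K. max 1 (real (csize n z k)))"
    unfolding prod.cartesian_product by (simp add: case_prod_beta)
  finally show ?thesis by simp
qed

lemma prod_model_weight_eq:
  "(\<Prod>p\<in>{..<K} \<times> {..<K}. model_weight (csize n z (fst p)) (card (J (fst p) (snd p)))) =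
    48 ^ (2 * Jcard K J) * exp (- (26 * (\<Sum>k<K. \<Sum>l<K.
      real (card (J k l)) * ln (real (csize n z k) * exp 1 / real (card (J k l))))))"
proof -
  let ?B = "{..<K} \<times> {..<K}" and ?c = "\<lambda>p. card (J (fst p) (snd p))"
  let ?T = "\<lambda>p. real (?c p) * ln (real (csize n z (fst p)) * exp 1 / real (?c p))"
  have "(\<Prod>p\<in>?B. model_weight (csize n z (fst p)) (?c p)) =
      (\<Prod>p\<in>?B. (48::real) ^ (2 * ?c p)) * (\<Prod>p\<in>?B. exp (- (26 * ?T p)))"
    by (simp add: model_weight_def prod.distrib)
  also have "(\<Prod>p\<in>?B. (48::real) ^ (2 * ?c p)) = 48 ^ (2 * Jcard K J)"
    by (simp add: power_sum[symmetric] Jcard_def sum_distrib_left[symmetric] sum.cartesian_product case_prod_beta)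
  also have "(\<Prod>p\<in>?B. exp (- (26 * ?T p))) = exp (- (26 * (\<Sum>k<K. \<Sum>l<K.
      real (card (J k l)) * ln (real (csize n z k) * exp 1 / real (card (J k l))))))"
    by (simp add: exp_sum[symmetric] sum_negf sum_distrib_left[symmetric] sum.cartesian_product case_prod_beta)
  finally show ?thesis .
qed

lemma exp_nat_mult_ln: "0 < x \<Longrightarrow> x ^ m = exp (real m * ln x)"
  by (simp add: exp_of_nat_mult)

lemma prod_max_csize_mult_exp_eq_1:
  "(\<Prod>k<K. (max 1 (real (csize n z k))) ^ K) * exp (- (real K * (\<Sum>k<K. ln (real (csize n z k))))) = 1"
proof -
  have one: "(max 1 (real m)) ^ K * exp (- (real K * ln (real m))) = 1" for m :: nat
    by (cases "m = 0") (simp_all add: exp_nat_mult_ln exp_add[symmetric])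
  have "exp (- (real K * (\<Sum>k<K. ln (real (csize n z k))))) = (\<Prod>k<K. exp (- (real K * ln (real (csize n z k)))))"
    by (simp add: exp_sum[symmetric] sum_distrib_left sum_negf)
  then show ?thesis by (simp add: prod.distrib[symmetric] one)
qed

section \<open>Discarding thin blocks\<close>

text \<open>In the structured penalty a block whose row or column set has fewer than two elements is
  cheaper to drop: its contribution \<open>|J k l| |J l k| \<le> |J k l| + |J l k|\<close> to the
  operator-norm sum is paid for by its own penalty term.\<close>

definition drop_thin :: "(nat \<Rightarrow> nat \<Rightarrow> nat set) \<Rightarrow> nat \<Rightarrow> nat \<Rightarrow> nat set" where
  "drop_thin J k l = (if 2 \<le> card (J k l) \<and> 2 \<le> card (J l k) then J k l else {})"

lemma sparsity_family_drop_thin: "sparsity_family n K z J \<Longrightarrow> sparsity_family n K z (drop_thin J)"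
  unfolding sparsity_family_def drop_thin_def by auto

lemma drop_thin_empty_or_card_ge2: "drop_thin J k l = {} \<or> 2 \<le> card (drop_thin J k l)"
  by (simp add: drop_thin_def)

lemma op_norm_proj_block_sq_le:
  assumes sf: "sparsity_family n K z J" and X: "\<forall>i j. \<bar>X i j\<bar> \<le> 1"
  shows "(op_norm (comm n z k) (comm n z l) (proj_block J k l X))\<^sup>2 \<le> real (card (J k l)) * real (card (J l k))"
proof -
  let ?M = "proj_block J k l X"
  have fin: "finite (comm n z m)" for m by (simp add: comm_def)
  have "(\<Sum>i\<in>comm n z k. \<Sum>j\<in>comm n z l. (?M i j)\<^sup>2) = (\<Sum>i\<in>J k l. \<Sum>j\<in>comm n z l. (?M i j)\<^sup>2)"
    by (rule sum.mono_neutral_right[OF fin sparsity_family_subset_comm[OF sf]]) (auto simp: proj_block_def)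
  also have "\<dots> = (\<Sum>i\<in>J k l. \<Sum>j\<in>J l k. (?M i j)\<^sup>2)"
    by (intro sum.cong refl sum.mono_neutral_right[OF fin sparsity_family_subset_comm[OF sf]])
       (auto simp: proj_block_def)
  also have "\<dots> \<le> (\<Sum>i\<in>J k l. \<Sum>j\<in>J l k. (1::real))"
    using X by (intro sum_mono) (simp add: proj_block_def abs_square_le_1)
  also have "\<dots> = real (card (J k l)) * real (card (J l k))" by simp
  finally have S: "(\<Sum>i\<in>comm n z k. \<Sum>j\<in>comm n z l. (?M i j)\<^sup>2) \<le> real (card (J k l)) * real (card (J l k))" .
  have "(op_norm (comm n z k) (comm n z l) ?M)\<^sup>2 \<le> (\<Sum>i\<in>comm n z k. \<Sum>j\<in>comm n z l. (?M i j)\<^sup>2)"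
    using power_mono[OF op_norm_le_frobenius op_norm_nonneg, where n = 2] by (simp add: sum_nonneg)
  then show ?thesis using S by linarith
qed

lemma nat_le_mult_ln_ratio:
  assumes "c \<le> m"
  shows "real c \<le> real c * ln (real m * exp 1 / real c)"
proof (cases "c = 0")
  case False
  have "exp 1 \<le> real m * exp 1 / real c" using assms False by (simp add: field_simps)
  then have "1 \<le> ln (real m * exp 1 / real c)"
    by (subst ln_ge_iff) (auto intro: less_le_trans[OF exp_gt_zero])
  then show ?thesis using mult_left_mono[of 1 _ "real c"] by simp
qed simp

lemma mult_le_add_unless_both_ge2:
  assumes "\<not> (2 \<le> a \<and> 2 \<le> b)" shows "a * b \<le> a + (b::nat)"
proof -
  have "a \<le> 1 \<or> b \<le> 1" using assms by linarith
  then show ?thesis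
  proof
    assume "a \<le> 1"
    then have "a * b \<le> 1 * b" by (rule mult_le_mono1)
    then show ?thesis by linarith
  next
    assume "b \<le> 1"
    then have "a * b \<le> a * 1" by (rule mult_le_mono2)
    then show ?thesis by linarith
  qed
qed

lemma card_sub_card_drop_thin:
  "real (card (J k l)) - real (card (drop_thin J k l))
    = (if 2 \<le> card (J k l) \<and> 2 \<le> card (J l k) then 0 else real (card (J k l)))"
  by (simp add: drop_thin_def)

lemma proj_op_sum_le_drop_thin:
  assumes sf: "sparsity_family n K z J" and X: "\<forall>i j. \<bar>X i j\<bar> \<le> 1"
  shows "proj_op_sum n z J K X \<le> proj_op_sum n z (drop_thin J) K X
    + 2 * (\<Sum>k<K. \<Sum>l<K. real (card (J k l)) - real (card (drop_thin J k l)))"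
proof -
  define d where "d k l = real (card (J k l)) - real (card (drop_thin J k l))" for k l
  define a where "a J' k l = op_norm (comm n z k) (comm n z l) (proj_block J' k l X)" for J' k l
  have blk: "(a J k l)\<^sup>2 \<le> (a (drop_thin J) k l)\<^sup>2 + (d k l + d l k)" for k l
  proof (cases "2 \<le> card (J k l) \<and> 2 \<le> card (J l k)")
    case True
    then have "proj_block (drop_thin J) k l X = proj_block J k l X"
      by (intro ext) (simp add: proj_block_def drop_thin_def conj_commute)
    then show ?thesis using True by (simp add: a_def d_def card_sub_card_drop_thin conj_commute)
  next
    case False
    have "(a J k l)\<^sup>2 \<le> real (card (J k l)) * real (card (J l k))"
      unfolding a_def by (rule op_norm_proj_block_sq_le[OF sf X])
    also have "\<dots> \<le> d k l + d l k"
      using False mult_le_add_unless_both_ge2[of "card (J k l)" "card (J l k)"]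
      by (simp add: d_def card_sub_card_drop_thin conj_commute flip: of_nat_mult of_nat_add)
    moreover have "proj_block (drop_thin J) k l X = (\<lambda>i j. 0)"
      using False by (intro ext) (auto simp: proj_block_def drop_thin_def)
    ultimately show ?thesis by (simp add: a_def)
  qed
  have "proj_op_sum n z J K X \<le> (\<Sum>k<K. \<Sum>l<K. (a (drop_thin J) k l)\<^sup>2 + (d k l + d l k))"
    unfolding proj_op_sum_def a_def[symmetric] by (intro sum_mono blk)
  also have "\<dots> = proj_op_sum n z (drop_thin J) K X + 2 * (\<Sum>k<K. \<Sum>l<K. d k l)"
    using sum.swap[of "\<lambda>k l. d l k" "{..<K}" "{..<K}"]
    by (simp add: proj_op_sum_def a_def sum.distrib)
  finally show ?thesis by (simp add: d_def)
qed

lemma dropped_mass_le_F1_s_diff: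
  assumes sf: "sparsity_family n K z J" and C: "2 \<le> C1 + C2"
  shows "2 * (\<Sum>k<K. \<Sum>l<K. real (card (J k l)) - real (card (drop_thin J k l)))
    \<le> F1_s C1 C2 n z J K - F1_s C1 C2 n z (drop_thin J) K"
proof -
  define T where "T J' k l = real (card (J' k l)) * ln (real (csize n z k) * exp 1 / real (card (J' k l)))"
    for J' :: "nat \<Rightarrow> nat \<Rightarrow> nat set" and k l
  define D where "D = (\<Sum>k<K. \<Sum>l<K. real (card (J k l)) - real (card (drop_thin J k l)))"
  have "D \<le> (\<Sum>k<K. \<Sum>l<K. T J k l - T (drop_thin J) k l)"
    unfolding D_def card_sub_card_drop_thin
    using nat_le_mult_ln_ratio[OF card_le_csize[OF sf]] by (intro sum_mono) (auto simp: T_def drop_thin_def)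
  moreover have "0 \<le> D" unfolding D_def card_sub_card_drop_thin by (intro sum_nonneg) auto
  ultimately have "2 * D \<le> (C1 + C2) * (\<Sum>k<K. \<Sum>l<K. T J k l - T (drop_thin J) k l)"
    using C by (intro mult_mono) auto
  also have "\<dots> = F1_s C1 C2 n z J K - F1_s C1 C2 n z (drop_thin J) K"
    by (simp add: F1_s_def T_def sum_subtractf right_diff_distrib)
  finally show ?thesis by (simp add: D_def)
qed

lemma proj_op_sum_sub_F1_s_le_drop_thin:
  assumes sf: "sparsity_family n K z J" and X: "\<forall>i j. \<bar>X i j\<bar> \<le> 1" and C: "2 \<le> C1 + C2"
  shows "proj_op_sum n z J K X - F1_s C1 C2 n z J K
    \<le> proj_op_sum n z (drop_thin J) K X - F1_s C1 C2 n z (drop_thin J) K"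
  using proj_op_sum_le_drop_thin[OF sf X] dropped_mass_le_F1_s_diff[OF sf C] by linarith

section \<open>Union bound over all models\<close>

text \<open>The clustering only matters on the nodes \<open>{..<n}\<close>, so it may be restricted to the finite set of
  label functions \<open>{..<n} \<rightarrow>\<^sub>E {..<K}\<close>.\<close>

lemma comm_restrict [simp]: "comm n (restrict z {..<n}) k = comm n z k"
  by (auto simp: comm_def)

lemma sparsity_family_restrict_iff [simp]:
  "sparsity_family n K (restrict z {..<n}) J = sparsity_family n K z J"
  by (simp add: sparsity_family_def)

lemma proj_op_sum_restrict [simp]: "proj_op_sum n (restrict z {..<n}) J K X = proj_op_sum n z J K X"
  by (simp add: proj_op_sum_def)

lemma F1_s_restrict [simp]: "F1_s C1 C2 n (restrict z {..<n}) J K = F1_s C1 C2 n z J K"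
  by (simp add: F1_s_def csize_def)

lemma restrict_mem_PiE: "clustering n K z \<Longrightarrow> restrict z {..<n} \<in> {..<n} \<rightarrow>\<^sub>E {..<K}"
  by (auto simp: clustering_def)

lemma clustering_if_mem_PiE: "z \<in> {..<n} \<rightarrow>\<^sub>E {..<K} \<Longrightarrow> clustering n K z"
  by (auto simp: clustering_def)

text \<open>There are \<open>K ^ n\<close> clusterings with \<open>K\<close> labels: the terms \<open>n ln K\<close> and \<open>ln n\<close> of the penalty
  pay for the choice of the clustering and of \<open>K\<close>.\<close>

lemma prob_UN_models_le:
  fixes M :: "'a pmf"
  assumes fin: "\<And>K z. K \<in> {1..n} \<Longrightarrow> z \<in> {..<n} \<rightarrow>\<^sub>E {..<K} \<Longrightarrow> finite (F K z)"
    and bound: "\<And>K z. K \<in> {1..n} \<Longrightarrow> z \<in> {..<n} \<rightarrow>\<^sub>E {..<K} \<Longrightarrow>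
      (\<Sum>J\<in>F K z. measure_pmf.prob M (E K z J)) \<le> exp (- (ln (real n) + real n * ln (real K))) * exp (- t)"
  shows "measure_pmf.prob M (\<Union>K\<in>{1..n}. \<Union>z\<in>{..<n} \<rightarrow>\<^sub>E {..<K}. \<Union>J\<in>F K z. E K z J) \<le> exp (- t)"
proof -
  let ?Z = "\<lambda>K::nat. {..<n} \<rightarrow>\<^sub>E {..<K}"
  have "measure_pmf.prob M (\<Union>K\<in>{1..n}. \<Union>z\<in>?Z K. \<Union>J\<in>F K z. E K z J)
      \<le> (\<Sum>K\<in>{1..n}. measure_pmf.prob M (\<Union>z\<in>?Z K. \<Union>J\<in>F K z. E K z J))"
    by (rule measure_pmf.finite_measure_subadditive_finite) simp_all
  also have "\<dots> \<le> (\<Sum>K\<in>{1..n}. \<Sum>z\<in>?Z K. measure_pmf.prob M (\<Union>J\<in>F K z. E K z J))"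
    by (intro sum_mono measure_pmf.finite_measure_subadditive_finite) (simp_all add: finite_PiE)
  also have "\<dots> \<le> (\<Sum>K\<in>{1..n}. \<Sum>z\<in>?Z K. \<Sum>J\<in>F K z. measure_pmf.prob M (E K z J))"
    by (intro sum_mono measure_pmf.finite_measure_subadditive_finite fin) simp_all
  also have "\<dots> \<le> (\<Sum>K\<in>{1..n}. \<Sum>z\<in>?Z K. exp (- (ln (real n) + real n * ln (real K))) * exp (- t))"
    by (intro sum_mono bound) auto
  also have "\<dots> = (\<Sum>K\<in>{1..n}. exp (- t) / real n)"
  proof (rule sum.cong[OF refl])
    fix K assume K: "K \<in> {1..n}"
    then have "0 < real K" "0 < real n" by auto
    then show "(\<Sum>z\<in>?Z K. exp (- (ln (real n) + real n * ln (real K))) * exp (- t)) = exp (- t) / real n"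
      by (simp add: card_PiE exp_nat_mult_ln exp_diff exp_minus field_simps)
  qed
  also have "\<dots> \<le> exp (- t)" by (cases "n = 0") auto
  finally show ?thesis .
qed

lemma prob_exists_model_le:
  fixes M :: "'a pmf"
  assumes cover: "\<And>A K z J. K \<in> {1..n} \<Longrightarrow> clustering n K z \<Longrightarrow> sparsity_family n K z J \<Longrightarrow>
      Q K z J A \<Longrightarrow> \<exists>J'\<in>F K (restrict z {..<n}). A \<in> E K (restrict z {..<n}) J'"
    and fin: "\<And>K z. K \<in> {1..n} \<Longrightarrow> z \<in> {..<n} \<rightarrow>\<^sub>E {..<K} \<Longrightarrow> finite (F K z)"
    and bound: "\<And>K z. K \<in> {1..n} \<Longrightarrow> z \<in> {..<n} \<rightarrow>\<^sub>E {..<K} \<Longrightarrow>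
      (\<Sum>J\<in>F K z. measure_pmf.prob M (E K z J)) \<le> exp (- (ln (real n) + real n * ln (real K))) * exp (- t)"
  shows "measure_pmf.prob M {A. \<exists>K z J. K \<in> {1..n} \<and> clustering n K z \<and> sparsity_family n K z J \<and> Q K z J A}
    \<le> exp (- t)"
proof -
  have "{A. \<exists>K z J. K \<in> {1..n} \<and> clustering n K z \<and> sparsity_family n K z J \<and> Q K z J A}
      \<subseteq> (\<Union>K\<in>{1..n}. \<Union>z\<in>{..<n} \<rightarrow>\<^sub>E {..<K}. \<Union>J\<in>F K z. E K z J)"
  proof clarify
    fix A K z J assume K: "K \<in> {1..n}" and cl: "clustering n K z"
      and "sparsity_family n K z J" "Q K z J A"
    then obtain J' where "J' \<in> F K (restrict z {..<n})" "A \<in> E K (restrict z {..<n}) J'"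
      using cover by blast
    moreover have "restrict z {..<n} \<in> {..<n} \<rightarrow>\<^sub>E {..<K}" by (rule restrict_mem_PiE[OF cl])
    ultimately show "A \<in> (\<Union>K\<in>{1..n}. \<Union>z\<in>{..<n} \<rightarrow>\<^sub>E {..<K}. \<Union>J\<in>F K z. E K z J)"
      using K by blast
  qed
  then have "measure_pmf.prob M {A. \<exists>K z J. K \<in> {1..n} \<and> clustering n K z \<and> sparsity_family n K z J \<and> Q K z J A}
      \<le> measure_pmf.prob M (\<Union>K\<in>{1..n}. \<Union>z\<in>{..<n} \<rightarrow>\<^sub>E {..<K}. \<Union>J\<in>F K z. E K z J)"
    by (rule measure_pmf.finite_measure_mono) simp
  also have "\<dots> \<le> exp (- t)" by (rule prob_UN_models_le[OF fin bound])
  finally show ?thesis .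
qed

lemma Jcard_le: "sparsity_family n K z J \<Longrightarrow> Jcard K J \<le> n * K"
  using card_mono[OF _ left_supp_subset, of n K z J] by (simp add: card_left_supp card_cartesian_product)

lemma F1_ns_nonneg:
  assumes "sparsity_family n K z J" "K \<in> {1..n}" "0 \<le> C1 + C2" "0 \<le> C2"
  shows "0 \<le> F1_ns C1 C2 n J K"
proof -
  have "0 \<le> real (Jcard K J) * ln (real n * real K * exp 1 / real (Jcard K J))"
    using nat_le_mult_ln_ratio[OF Jcard_le[OF assms(1)]] by simp
  moreover have "0 \<le> ln (real n)" "0 \<le> ln (real K)" using assms(2) by auto
  ultimately show ?thesis using assms(3,4) unfolding F1_ns_def by (simp add: mult.assoc)
qed

lemma F1_s_nonneg:
  assumes sf: "sparsity_family n K z J" and "K \<in> {1..n}" "0 \<le> C1 + C2" "0 \<le> C2"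
  shows "0 \<le> F1_s C1 C2 n z J K"
proof -
  have "0 \<le> (\<Sum>k<K. \<Sum>l<K. real (card (J k l)) * ln (real (csize n z k) * exp 1 / real (card (J k l))))"
    by (intro sum_nonneg order_trans[OF of_nat_0_le_iff nat_le_mult_ln_ratio[OF card_le_csize[OF sf]]])
  moreover have "0 \<le> ln (real m)" for m :: nat by (cases m) auto
  then have "0 \<le> (\<Sum>k<K. ln (real (csize n z k)))" by (intro sum_nonneg)
  moreover have "0 \<le> ln (real n)" "0 \<le> ln (real K)" using assms(2) by auto
  ultimately show ?thesis using assms(3,4) unfolding F1_s_def by simp
qed

lemma proj_op_sum_Jcard_0:
  assumes sf: "sparsity_family n K z J" and "Jcard K J = 0"
  shows "proj_op_sum n z J K X = 0"
proof -
  have "J k l = {}" if "k < K" "l < K" for k l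
    using assms that sparsity_family_finite[OF sf] by (simp add: Jcard_def)
  then have "proj_block J k l X = (\<lambda>i j. 0)" if "k < K" "l < K" for k l
    using that by (intro ext) (simp add: proj_block_def)
  then show ?thesis by (simp add: proj_op_sum_def)
qed

lemma exp_neg_quarter_penalty:
  fixes a b c t :: real
  shows "exp (- (104 * a + 4 * (b + c) + 4 * t) / 4) = exp (- (26 * a)) * (exp (- b) * exp (- c) * exp (- t))"
proof -
  have "- (104 * a + 4 * (b + c) + 4 * t) / 4 = - (26 * a) + (- b + - c + - t)" by simp
  then show ?thesis by (simp only: exp_add)
qed

lemma prob_model_ns_gt_le:
  assumes P: "\<forall>i j. 0 \<le> P i j \<and> P i j \<le> 1 \<and> P i j = P j i" and t: "t > 0"
    and K: "K \<in> {1..n}" and cl: "clustering n K z" and sf: "sparsity_family n K z J"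
  shows "measure_pmf.prob (adj_pmf n P)
      {A. proj_op_sum n z J K (\<lambda>i j. of_bool (A i j) - P i j) > F1_ns 100 4 n J K + 4 * t}
    \<le> model_weight (n * K) (Jcard K J)
      * (exp (- (ln (real n) + real n * ln (real K))) * exp (- (2 * ln (real n))) * exp (- t))"
proof -
  have F: "F1_ns 100 4 n J K = 104 * (real (Jcard K J) * ln (real (n * K) * exp 1 / real (Jcard K J)))
      + 4 * ((ln (real n) + real n * ln (real K)) + 2 * ln (real n))"
    unfolding F1_ns_def by (simp add: algebra_simps)
  have "0 \<le> F1_ns 100 4 n J K" by (rule F1_ns_nonneg[OF sf K]) simp_all
  then have "measure_pmf.prob (adj_pmf n P)
      {A. proj_op_sum n z J K (\<lambda>i j. of_bool (A i j) - P i j) > F1_ns 100 4 n J K + 4 * t}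
    \<le> 48 ^ (2 * Jcard K J) * exp (- (F1_ns 100 4 n J K + 4 * t) / 4)"
    using t by (intro prob_proj_op_sum_gt_le[OF P cl sf]) auto
  also have "\<dots> = model_weight (n * K) (Jcard K J)
      * (exp (- (ln (real n) + real n * ln (real K))) * exp (- (2 * ln (real n))) * exp (- t))"
    unfolding F exp_neg_quarter_penalty model_weight_def by (simp only: mult.assoc)
  finally show ?thesis .
qed

lemma prob_exists_model_ns_gt:
  assumes P: "\<forall>i j. 0 \<le> P i j \<and> P i j \<le> 1 \<and> P i j = P j i" and t: "t > 0"
  shows "measure_pmf.prob (adj_pmf n P) {A. \<exists>K z J. K \<in> {1..n} \<and> clustering n K z \<and> sparsity_family n K z J \<and>
      proj_op_sum n z J K (\<lambda>i j. of_bool (A i j) - P i j) - F1_ns 100 4 n J K > 4 * t} \<le> exp (- t)"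
proof (rule prob_exists_model_le)
  let ?X = "\<lambda>A i j. of_bool (A i j) - P i j"
  let ?F = "\<lambda>K z. {J. sparsity_family n K z J \<and> 1 \<le> Jcard K J}"
  let ?E = "\<lambda>K z J. {A. proj_op_sum n z J K (?X A) > F1_ns 100 4 n J K + 4 * t}"
  fix A K z J assume K: "K \<in> {1..n}" and "clustering n K z" and sf: "sparsity_family n K z J"
    and gt: "proj_op_sum n z J K (?X A) - F1_ns 100 4 n J K > 4 * t"
  have "Jcard K J \<noteq> 0"
  proof
    assume "Jcard K J = 0"
    moreover have "0 \<le> F1_ns 100 4 n J K" by (rule F1_ns_nonneg[OF sf K]) simp_all
    ultimately show False using gt t proj_op_sum_Jcard_0[OF sf] by fastforce
  qed
  then have "J \<in> ?F K (restrict z {..<n})" using sf by simp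
  moreover have "A \<in> ?E K (restrict z {..<n}) J" using gt by simp
  ultimately show "\<exists>J'\<in>?F K (restrict z {..<n}). A \<in> ?E K (restrict z {..<n}) J'" by blast
next
  fix K z assume K: "K \<in> {1..n}" and z: "z \<in> {..<n} \<rightarrow>\<^sub>E {..<K}"
  let ?F = "{J. sparsity_family n K z J \<and> 1 \<le> Jcard K J}"
  let ?c = "exp (- (ln (real n) + real n * ln (real K))) * exp (- (2 * ln (real n))) * exp (- t)"
  show "finite ?F" by (rule finite_subset[OF _ finite_sparsity_families]) auto
  have "(\<Sum>J\<in>?F. measure_pmf.prob (adj_pmf n P)
        {A. proj_op_sum n z J K (\<lambda>i j. of_bool (A i j) - P i j) > F1_ns 100 4 n J K + 4 * t})
      \<le> (\<Sum>J\<in>?F. model_weight (n * K) (Jcard K J)) * ?c"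
    unfolding sum_distrib_right
    by (intro sum_mono prob_model_ns_gt_le[OF P t K clustering_if_mem_PiE[OF z]]) simp
  also have "\<dots> \<le> ?c"
    using sum_model_weight_sparsity_families_le1[of n K z]
    by (intro mult_left_le_one_le) (auto simp: sum_nonneg model_weight_nonneg)
  also have "\<dots> \<le> exp (- (ln (real n) + real n * ln (real K))) * exp (- t)"
    using K by (intro mult_right_mono mult_left_le_one_le) auto
  finally show "(\<Sum>J\<in>?F. measure_pmf.prob (adj_pmf n P)
        {A. proj_op_sum n z J K (\<lambda>i j. of_bool (A i j) - P i j) > F1_ns 100 4 n J K + 4 * t})
      \<le> exp (- (ln (real n) + real n * ln (real K))) * exp (- t)" .
qed

lemma prob_model_s_gt_le:
  assumes P: "\<forall>i j. 0 \<le> P i j \<and> P i j \<le> 1 \<and> P i j = P j i" and t: "t > 0"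
    and K: "K \<in> {1..n}" and cl: "clustering n K z" and sf: "sparsity_family n K z J"
  shows "measure_pmf.prob (adj_pmf n P)
      {A. proj_op_sum n z J K (\<lambda>i j. of_bool (A i j) - P i j) > F1_s 100 4 n z J K + 4 * t}
    \<le> (\<Prod>p\<in>{..<K} \<times> {..<K}. model_weight (csize n z (fst p)) (card (J (fst p) (snd p))))
      * (exp (- (ln (real n) + real n * ln (real K))) * exp (- (real K * (\<Sum>k<K. ln (real (csize n z k)))))
         * exp (- t))"
proof -
  have F: "F1_s 100 4 n z J K = 104 * (\<Sum>k<K. \<Sum>l<K. real (card (J k l)) * ln (real (csize n z k) * exp 1 / real (card (J k l))))
      + 4 * ((ln (real n) + real n * ln (real K)) + real K * (\<Sum>k<K. ln (real (csize n z k))))"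
    unfolding F1_s_def by simp
  have "0 \<le> F1_s 100 4 n z J K" by (rule F1_s_nonneg[OF sf K]) simp_all
  then have "measure_pmf.prob (adj_pmf n P)
      {A. proj_op_sum n z J K (\<lambda>i j. of_bool (A i j) - P i j) > F1_s 100 4 n z J K + 4 * t}
    \<le> 48 ^ (2 * Jcard K J) * exp (- (F1_s 100 4 n z J K + 4 * t) / 4)"
    using t by (intro prob_proj_op_sum_gt_le[OF P cl sf]) auto
  also have "\<dots> = (\<Prod>p\<in>{..<K} \<times> {..<K}. model_weight (csize n z (fst p)) (card (J (fst p) (snd p))))
      * (exp (- (ln (real n) + real n * ln (real K))) * exp (- (real K * (\<Sum>k<K. ln (real (csize n z k)))))
         * exp (- t))"
    unfolding F exp_neg_quarter_penalty prod_model_weight_eq by (simp only: mult.assoc)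
  finally show ?thesis .
qed

lemma prob_exists_model_s_gt:
  assumes P: "\<forall>i j. 0 \<le> P i j \<and> P i j \<le> 1 \<and> P i j = P j i" and t: "t > 0"
  shows "measure_pmf.prob (adj_pmf n P) {A. \<exists>K z J. K \<in> {1..n} \<and> clustering n K z \<and> sparsity_family n K z J \<and>
      proj_op_sum n z J K (\<lambda>i j. of_bool (A i j) - P i j) - F1_s 100 4 n z J K > 4 * t} \<le> exp (- t)"
proof (rule prob_exists_model_le)
  let ?X = "\<lambda>A i j. of_bool (A i j) - P i j"
  let ?F = "\<lambda>K z. {J. sparsity_family n K z J \<and> (\<forall>k l. J k l = {} \<or> 2 \<le> card (J k l))}"
  let ?E = "\<lambda>K z J. {A. proj_op_sum n z J K (?X A) > F1_s 100 4 n z J K + 4 * t}"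
  fix A K z J assume "K \<in> {1..n}" and "clustering n K z" and sf: "sparsity_family n K z J"
    and gt: "proj_op_sum n z J K (?X A) - F1_s 100 4 n z J K > 4 * t"
  have "drop_thin J \<in> ?F K (restrict z {..<n})"
    using sparsity_family_drop_thin[OF sf] drop_thin_empty_or_card_ge2 by simp
  moreover have "A \<in> ?E K (restrict z {..<n}) (drop_thin J)"
    using proj_op_sum_sub_F1_s_le_drop_thin[OF sf adj_dev_abs_le1[OF P, of A], of 100 4] gt by simp
  ultimately show "\<exists>J'\<in>?F K (restrict z {..<n}). A \<in> ?E K (restrict z {..<n}) J'" by blast
next
  fix K z assume K: "K \<in> {1..n}" and z: "z \<in> {..<n} \<rightarrow>\<^sub>E {..<K}"
  let ?F = "{J. sparsity_family n K z J \<and> (\<forall>k l. J k l = {} \<or> 2 \<le> card (J k l))}"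
  let ?W = "\<lambda>J. \<Prod>p\<in>{..<K} \<times> {..<K}. model_weight (csize n z (fst p)) (card (J (fst p) (snd p)))"
  let ?c = "exp (- (ln (real n) + real n * ln (real K))) * exp (- (real K * (\<Sum>k<K. ln (real (csize n z k)))))
    * exp (- t)"
  show "finite ?F" by (rule finite_subset[OF _ finite_sparsity_families]) auto
  have "(\<Sum>J\<in>?F. measure_pmf.prob (adj_pmf n P)
        {A. proj_op_sum n z J K (\<lambda>i j. of_bool (A i j) - P i j) > F1_s 100 4 n z J K + 4 * t})
      \<le> (\<Sum>J\<in>?F. ?W J) * ?c"
    unfolding sum_distrib_right
    by (intro sum_mono prob_model_s_gt_le[OF P t K clustering_if_mem_PiE[OF z]]) simp
  also have "\<dots> \<le> (\<Prod>k<K. (max 1 (real (csize n z k))) ^ K) * ?c"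
    using sum_prod_model_weight_le[where n = n and K = K and z = z] by (intro mult_right_mono) simp_all
  also have "\<dots> = exp (- (ln (real n) + real n * ln (real K))) * exp (- t)"
    using prod_max_csize_mult_exp_eq_1[where K = K and n = n and z = z] by (simp add: mult_ac)
  finally show "(\<Sum>J\<in>?F. measure_pmf.prob (adj_pmf n P)
        {A. proj_op_sum n z J K (\<lambda>i j. of_bool (A i j) - P i j) > F1_s 100 4 n z J K + 4 * t})
      \<le> exp (- (ln (real n) + real n * ln (real K))) * exp (- t)" .
qed

lemma prob_estimator_ge:
  fixes M :: "(nat \<Rightarrow> nat \<Rightarrow> bool) pmf"
  fixes c :: real
  assumes bad: "measure_pmf.prob M {A. \<exists>K z J. K \<in> {1..n} \<and> clustering n K z \<and> sparsity_family n K z J \<and>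
      Q K z J A > c} \<le> e"
    and feas: "\<forall>A. feasible n (Th A) (Zh A) (Jh A) (Kh A)"
  shows "measure_pmf.prob M {A. Q (Kh A) (Zh A) (Jh A) A \<le> c} \<ge> 1 - e"
proof -
  have "UNIV - {A. Q (Kh A) (Zh A) (Jh A) A \<le> c} \<subseteq>
      {A. \<exists>K z J. K \<in> {1..n} \<and> clustering n K z \<and> sparsity_family n K z J \<and> Q K z J A > c}"
  proof clarify
    fix A assume "\<not> Q (Kh A) (Zh A) (Jh A) A \<le> c"
    moreover have "Kh A \<in> {1..n}" "clustering n (Kh A) (Zh A)" "sparsity_family n (Kh A) (Zh A) (Jh A)"
      using feas unfolding feasible_def by blast+
    ultimately show "\<exists>K z J. K \<in> {1..n} \<and> clustering n K z \<and> sparsity_family n K z J \<and> Q K z J A > c"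
      by (intro exI[of _ "Kh A"] exI[of _ "Zh A"] exI[of _ "Jh A"]) (simp add: not_le)
  qed
  then have "measure_pmf.prob M (UNIV - {A. Q (Kh A) (Zh A) (Jh A) A \<le> c}) \<le> e"
    by (rule order_trans[OF measure_pmf.finite_measure_mono bad]) simp
  then show ?thesis using measure_pmf.prob_compl[of "{A. Q (Kh A) (Zh A) (Jh A) A \<le> c}" M] by simp
qed

theorem lemma8:
  "\<exists>C1 C2 :: real. C1 > 0 \<and> C2 > 0 \<and>
    (\<forall>(n::nat) (P :: nat \<Rightarrow> nat \<Rightarrow> real)
       (Pen :: nat \<Rightarrow> (nat \<Rightarrow> nat \<Rightarrow> nat set) \<Rightarrow> nat \<Rightarrow> real)
       (Th :: (nat \<Rightarrow> nat \<Rightarrow> bool) \<Rightarrow> nat \<Rightarrow> nat \<Rightarrow> real)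
       (Zh :: (nat \<Rightarrow> nat \<Rightarrow> bool) \<Rightarrow> nat \<Rightarrow> nat)
       (Jh :: (nat \<Rightarrow> nat \<Rightarrow> bool) \<Rightarrow> nat \<Rightarrow> nat \<Rightarrow> nat set)
       (Kh :: (nat \<Rightarrow> nat \<Rightarrow> bool) \<Rightarrow> nat) (t::real).
      (\<forall>i j. 0 \<le> P i j \<and> P i j \<le> 1 \<and> P i j = P j i) \<and>
      (\<forall>A. feasible n (Th A) (Zh A) (Jh A) (Kh A) \<and>
           (\<forall>\<Theta> z J K. feasible n \<Theta> z J K \<longrightarrow>
              objective n Pen A (Th A) (Zh A) (Jh A) (Kh A) \<le> objective n Pen A \<Theta> z J K)) \<and>
      t > 0 \<longrightarrow>
      measure_pmf.prob (adj_pmf n P)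
        {A. proj_op_sum n (Zh A) (Jh A) (Kh A) (\<lambda>i j. of_bool (A i j) - P i j)
              - F1_ns C1 C2 n (Jh A) (Kh A) \<le> C2 * t} \<ge> 1 - exp (- t) \<and>
      measure_pmf.prob (adj_pmf n P)
        {A. proj_op_sum n (Zh A) (Jh A) (Kh A) (\<lambda>i j. of_bool (A i j) - P i j)
              - F1_s C1 C2 n (Zh A) (Jh A) (Kh A) \<le> C2 * t} \<ge> 1 - exp (- t))"
proof (rule exI[of _ 100], rule exI[of _ 4], intro conjI allI impI)
  fix n :: nat and P :: "nat \<Rightarrow> nat \<Rightarrow> real"
    and Pen :: "nat \<Rightarrow> (nat \<Rightarrow> nat \<Rightarrow> nat set) \<Rightarrow> nat \<Rightarrow> real"
    and Th :: "(nat \<Rightarrow> nat \<Rightarrow> bool) \<Rightarrow> nat \<Rightarrow> nat \<Rightarrow> real" and Zh :: "(nat \<Rightarrow> nat \<Rightarrow> bool) \<Rightarrow> nat \<Rightarrow> nat"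
    and Jh :: "(nat \<Rightarrow> nat \<Rightarrow> bool) \<Rightarrow> nat \<Rightarrow> nat \<Rightarrow> nat set" and Kh :: "(nat \<Rightarrow> nat \<Rightarrow> bool) \<Rightarrow> nat"
    and t :: real
  assume "(\<forall>i j. 0 \<le> P i j \<and> P i j \<le> 1 \<and> P i j = P j i) \<and>
      (\<forall>A. feasible n (Th A) (Zh A) (Jh A) (Kh A) \<and>
           (\<forall>\<Theta> z J K. feasible n \<Theta> z J K \<longrightarrow>
              objective n Pen A (Th A) (Zh A) (Jh A) (Kh A) \<le> objective n Pen A \<Theta> z J K)) \<and> t > 0"
  then have P: "\<forall>i j. 0 \<le> P i j \<and> P i j \<le> 1 \<and> P i j = P j i"
    and feas: "\<forall>A. feasible n (Th A) (Zh A) (Jh A) (Kh A)" and t: "t > 0" by blast+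
  show "measure_pmf.prob (adj_pmf n P) {A. proj_op_sum n (Zh A) (Jh A) (Kh A) (\<lambda>i j. of_bool (A i j) - P i j)
      - F1_ns 100 4 n (Jh A) (Kh A) \<le> 4 * t} \<ge> 1 - exp (- t)"
    by (rule prob_estimator_ge[OF prob_exists_model_ns_gt[OF P t] feas])
  show "measure_pmf.prob (adj_pmf n P) {A. proj_op_sum n (Zh A) (Jh A) (Kh A) (\<lambda>i j. of_bool (A i j) - P i j)
      - F1_s 100 4 n (Zh A) (Jh A) (Kh A) \<le> 4 * t} \<ge> 1 - exp (- t)"
    by (rule prob_estimator_ge[OF prob_exists_model_s_gt[OF P t] feas])
qed simp_all

end
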